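(* Let $P\ge 2$ be an integer, $m\in(-1,1)$, $\rho_o$ a real number such that $C^{out}=\rho_o\mathbf{1}\mathbf{1}^T+(1-\rho_o)I$ is positive semi-definite, and let $\delta_m>0$. Let $\delta M$ be a collection of real numbers $\delta M_{\mu\nu}$, $1\le\mu<\nu\le P$, with $|\delta M_{\mu\nu}|<\delta_m$, such that the symmetric matrix $C^{in}$ with $C^{in}_{\mu\mu}=1$ and $C^{in}_{\mu\nu}=C^{in}_{\nu\mu}=m+\delta M_{\mu\nu}$ for $\mu<\nu$ is a correlation matrix. Define $$\bar\epsilon_f[C^{in},C^{out}]=\left\lVert (C^{out})^{1/2}\left(I-(I+C^{in,U})^{-1}C^{in}\right)\right\rVert_F^2,$$ where $C^{in,U}$ is the strictly upper-triangular part of $C^{in}$ and $(C^{out})^{1/2}$ is the positive semi-definite square root of $C^{out}$, and let $\bar\epsilon_f[m,\rho_o]$ denote this quantity when all $\delta M_{\mu\nu}=0$. Then there are coefficients $G_{\mu\nu}$ depending only on $m$, $\rho_o$ and $P$ such that $$\bar\epsilon_f[C^{in},C^{out}]=\bar\epsilon_f[m,\rho_o]+2\sum_{\mu=1}^P\sum_{\nu=\mu+1}^P G_{\mu\nu}\,\delta M_{\mu\nu}+\mathcal{O}(\delta_m^2)\quad(\delta_m\to 0),$$ and, when $\rho_o=1$, $G_{\mu\nu}=G^+_{\mu\nu}+G^-_{\mu\nu}$ with $$G^+_{\mu\nu}=-(1-m)^{P+\mu-1}-(1-m)^{P+\nu-1}+\tfrac{3-m}{2-m}(1-m)^{\mu+\nu-1},$$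 $$G^-_{\mu\nu}=-\left(1-(1-m)^P\left(\tfrac{mP}{1-m}+\tfrac{3-m}{2-m}\right)\right)(1-m)^{P-(\nu-\mu)}.$$
   Context: $\mathbf{1}$ is the all-ones vector in $\mathbb{R}^P$, $I$ the $P\times P$ identity, and $\lVert\cdot\rVert_F$ the Frobenius norm. The function $\bar\epsilon_f[C^{in},C^{out}]$ is the asymptotic average final error of sequential (task-incremental) learning of $P$ linear regression tasks in a linear teacher–student model with input and output task-correlation matrices $C^{in}$, $C^{out}$, tasks learned in the order $1,\dots,P$. *)

theory Defs
  imports "Jordan_Normal_Form.Matrix"
begin

text \<open>All matrices are P x P real matrices (Jordan_Normal_Form type 'a mat, 0-based
  entries).  Task indices mu, nu of the paper (1-based) correspond to entries mu-1, nu-1.\<close>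

definition psd_mat :: "nat \<Rightarrow> real mat \<Rightarrow> bool" where
  "psd_mat n A \<longleftrightarrow> A \<in> carrier_mat n n \<and> transpose_mat A = A \<and>
     (\<forall>v \<in> carrier_vec n. v \<bullet> (A *\<^sub>v v) \<ge> 0)"

definition correlation_mat :: "nat \<Rightarrow> real mat \<Rightarrow> bool" where
  "correlation_mat n A \<longleftrightarrow> psd_mat n A \<and> (\<forall>i<n. A $$ (i,i) = 1)"

definition psd_sqrt :: "nat \<Rightarrow> real mat \<Rightarrow> real mat" where
  "psd_sqrt n A = (THE S. psd_mat n S \<and> S * S = A)"

definition mat_inv :: "nat \<Rightarrow> real mat \<Rightarrow> real mat" where
  "mat_inv n A = (THE B. B \<in> carrier_mat n n \<and> B * A = 1\<^sub>m n \<and> A * B = 1\<^sub>m n)"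

definition strict_upper :: "real mat \<Rightarrow> real mat" where
  "strict_upper A = mat (dim_row A) (dim_col A) (\<lambda>(i,j). if i < j then A $$ (i,j) else 0)"

definition frob_sq :: "real mat \<Rightarrow> real" where
  "frob_sq A = (\<Sum>i<dim_row A. \<Sum>j<dim_col A. (A $$ (i,j))^2)"

definition eps_f :: "nat \<Rightarrow> real mat \<Rightarrow> real mat \<Rightarrow> real" where
  "eps_f P Cin Cout =
     frob_sq (psd_sqrt P Cout * (1\<^sub>m P - mat_inv P (1\<^sub>m P + strict_upper Cin) * Cin))"

definition Cout_mat :: "nat \<Rightarrow> real \<Rightarrow> real mat" where
  "Cout_mat P \<rho> = mat P P (\<lambda>(i,j). if i = j then 1 else \<rho>)"

definition Cin_mat :: "nat \<Rightarrow> real \<Rightarrow> (nat \<Rightarrow> nat \<Rightarrow> real) \<Rightarrow> real mat" where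
  "Cin_mat P m dM = mat P P (\<lambda>(i,j). if i = j then 1
      else if i < j then m + dM (i+1) (j+1) else m + dM (j+1) (i+1))"

end

theory Submission
  imports Defs "Jordan_Normal_Form.Determinant"
begin

text \<open>The matrix \<open>Cout_mat P \<rho>\<close> has only the eigenvalues \<open>1 + (P - 1) \<rho>\<close> and \<open>1 - \<rho>\<close>, so its
  positive semi-definite root is explicit and unique, and the error becomes the quadratic form
  \<open>frob_inner (Cout * X) X\<close> of the residual \<open>X = 1 - (1 + U)\<^sup>-\<^sup>1 C\<close>.
  Write \<open>C = C0 + E\<close> and \<open>U = U0 + EU\<close> for the perturbation of the unperturbed input
  correlations \<open>C0\<close> and of their strictly upper part, and \<open>B0 = (1 + U0)\<^sup>-\<^sup>1\<close>.
  The resolvent identity \<open>B = B0 - B EU B0\<close> gives \<open>X = X0 + B0 K - B EU B0 K\<close> with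
  \<open>K = EU B0 C0 - E\<close> linear in \<open>dM\<close>, so in the entrywise 1-norm the error differs from
  \<open>eps_f[C0] + 2 frob_inner (Cout * X0) (B0 K)\<close> by \<open>O(\<delta>m\<^sup>2)\<close>; the coefficients \<open>G\<close> are read off
  from this linear term. The bound holds for every perturbation.

  For \<open>\<rho> = 1\<close>, \<open>Cout\<close> is the all-ones matrix and \<open>G\<close> only involves column sums: with
  \<open>a = 1 - m\<close>, those of \<open>B0\<close> are \<open>a\<^sup>p\<close>, those of \<open>X0\<close> are \<open>a\<^sup>P - a\<^sup>q\<^sup>+\<^sup>1\<close>, and \<open>B0 C0\<close> applied
  to the latter is obtained by solving the triangular system for \<open>1 + U0\<close> in closed form.\<close>

lemma index_mult_mat_sum:
  assumes "A \<in> carrier_mat nr n" "B \<in> carrier_mat n nc" "i < nr" "j < nc"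
  shows "(A * B) $$ (i,j) = (\<Sum>k<n. A $$ (i,k) * B $$ (k,j))"
  using assms by (simp add: scalar_prod_def lessThan_atLeast0)

lemma index_mult_mat_vec_sum:
  "i < dim_row A \<Longrightarrow> dim_col A = n \<Longrightarrow> (A *\<^sub>v vec n f) $ i = (\<Sum>j<n. A $$ (i,j) * f j)"
  by (simp add: scalar_prod_def lessThan_atLeast0)

lemma strict_upper_carrier [simp]: "C \<in> carrier_mat n n \<Longrightarrow> strict_upper C \<in> carrier_mat n n"
  unfolding strict_upper_def by auto

lemma dim_strict_upper [simp]:
  "dim_row (strict_upper C) = dim_row C" "dim_col (strict_upper C) = dim_col C"
  unfolding strict_upper_def by auto

lemma index_strict_upper [simp]: "i < dim_row C \<Longrightarrow> j < dim_col C \<Longrightarrow>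
    strict_upper C $$ (i,j) = (if i < j then C $$ (i,j) else 0)"
  unfolding strict_upper_def by auto

lemma mat_inv_eqI:
  assumes A: "A \<in> carrier_mat n n" and B: "B \<in> carrier_mat n n"
    and "B * A = 1\<^sub>m n" and AB: "A * B = 1\<^sub>m n"
  shows "mat_inv n A = B"
  unfolding mat_inv_def
proof (rule the_equality)
  fix B' assume B': "B' \<in> carrier_mat n n \<and> B' * A = 1\<^sub>m n \<and> A * B' = 1\<^sub>m n"
  have "B' = B' * (A * B)" using AB B' by auto
  also have "\<dots> = (B' * A) * B" by (rule assoc_mult_mat[symmetric]) (use A B B' in auto)
  also have "\<dots> = B" using B B' by (metis left_mult_one_mat)
  finally show "B' = B" .
qed (use assms in auto)

lemma mat_inv_one_plus_strict_upper:
  fixes C :: "real mat"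
  assumes C: "C \<in> carrier_mat n n"
  defines "A \<equiv> 1\<^sub>m n + strict_upper C"
  shows "mat_inv n A \<in> carrier_mat n n" "mat_inv n A * A = 1\<^sub>m n" "A * mat_inv n A = 1\<^sub>m n"
proof -
  have A: "A \<in> carrier_mat n n" using C unfolding A_def by simp
  have "upper_triangular A" using C unfolding A_def by (intro upper_triangularI) auto
  then have "det A = (\<Prod>i = 0..<n. A $$ (i,i))"
    using A by (simp add: det_upper_triangular prod_list_diag_prod)
  also have "\<dots> = 1" using C unfolding A_def by (intro prod.neutral) auto
  finally have "A \<in> Units (ring_mat TYPE(real) n ())"
    using det_non_zero_imp_unit[OF A] by simp
  then obtain B where "B \<in> carrier_mat n n" "B * A = 1\<^sub>m n" "A * B = 1\<^sub>m n"
    unfolding Units_def ring_mat_def by auto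
  with A mat_inv_eqI show "mat_inv n A \<in> carrier_mat n n" "mat_inv n A * A = 1\<^sub>m n"
    "A * mat_inv n A = 1\<^sub>m n" by auto
qed

section \<open>Frobenius inner product and entrywise 1-norm\<close>

definition frob_inner :: "real mat \<Rightarrow> real mat \<Rightarrow> real" where
  "frob_inner A B = (\<Sum>i<dim_row A. \<Sum>j<dim_col A. A $$ (i,j) * B $$ (i,j))"

lemma frob_sq_eq_frob_inner: "frob_sq A = frob_inner A A"
  unfolding frob_sq_def frob_inner_def by (simp add: power2_eq_square)

lemma frob_inner_commute:
  "A \<in> carrier_mat nr nc \<Longrightarrow> B \<in> carrier_mat nr nc \<Longrightarrow> frob_inner A B = frob_inner B A"
  unfolding frob_inner_def by (simp add: mult.commute)

lemma frob_inner_add_right: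
  assumes "A \<in> carrier_mat nr nc" "B \<in> carrier_mat nr nc" "C \<in> carrier_mat nr nc"
  shows "frob_inner A (B + C) = frob_inner A B + frob_inner A C"
  using assms unfolding frob_inner_def by (simp add: distrib_left sum.distrib)

lemma frob_inner_diff_right:
  assumes "A \<in> carrier_mat nr nc" "B \<in> carrier_mat nr nc" "C \<in> carrier_mat nr nc"
  shows "frob_inner A (B - C) = frob_inner A B - frob_inner A C"
  using assms unfolding frob_inner_def by (simp add: right_diff_distrib sum_subtractf)

lemma frob_inner_move_left_factor:
  assumes A: "A \<in> carrier_mat nr nc" and B: "B \<in> carrier_mat nr k" and C: "C \<in> carrier_mat k nc"
  shows "frob_inner A (B * C) = frob_inner (transpose_mat B * A) C"
proof -
  have "frob_inner A (B * C) = (\<Sum>i<nr. \<Sum>j<nc. \<Sum>l<k. A $$ (i,j) * B $$ (i,l) * C $$ (l,j))"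
    using assms unfolding frob_inner_def
    by (simp add: index_mult_mat_sum[OF B C] sum_distrib_left mult.assoc del: index_mult_mat(1))
  also have "\<dots> = (\<Sum>l<k. \<Sum>j<nc. \<Sum>i<nr. A $$ (i,j) * B $$ (i,l) * C $$ (l,j))"
    by (simp add: sum.swap[of _ "{..<k}"], simp add: sum.swap[of _ "{..<nr}"])
  also have "\<dots> = frob_inner (transpose_mat B * A) C"
    using assms unfolding frob_inner_def
    by (simp add: index_mult_mat_sum[of _ k nr _ nc] sum_distrib_left mult_ac del: index_mult_mat(1))
  finally show ?thesis .
qed

lemma frob_inner_move_right_factor:
  assumes A: "A \<in> carrier_mat nr nc" and B: "B \<in> carrier_mat nr k" and C: "C \<in> carrier_mat k nc"
  shows "frob_inner A (B * C) = frob_inner (A * transpose_mat C) B"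
proof -
  have "frob_inner A (B * C) = (\<Sum>i<nr. \<Sum>j<nc. \<Sum>l<k. A $$ (i,j) * B $$ (i,l) * C $$ (l,j))"
    using assms unfolding frob_inner_def
    by (simp add: index_mult_mat_sum[OF B C] sum_distrib_left mult.assoc del: index_mult_mat(1))
  also have "\<dots> = (\<Sum>i<nr. \<Sum>l<k. \<Sum>j<nc. A $$ (i,j) * B $$ (i,l) * C $$ (l,j))"
    by (simp add: sum.swap[of _ "{..<nc}"])
  also have "\<dots> = frob_inner (A * transpose_mat C) B"
    using assms unfolding frob_inner_def
    by (simp add: index_mult_mat_sum[of _ nr nc _ k] sum_distrib_left mult_ac del: index_mult_mat(1))
  finally show ?thesis .
qed

definition mat_l1_norm :: "real mat \<Rightarrow> real" where
  "mat_l1_norm A = (\<Sum>i<dim_row A. \<Sum>j<dim_col A. \<bar>A $$ (i,j)\<bar>)"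

lemma mat_l1_norm_nonneg: "0 \<le> mat_l1_norm A"
  unfolding mat_l1_norm_def by (intro sum_nonneg) auto

lemma abs_index_le_mat_l1_norm:
  assumes "i < dim_row A" "j < dim_col A"
  shows "\<bar>A $$ (i,j)\<bar> \<le> mat_l1_norm A"
proof -
  have "\<bar>A $$ (i,j)\<bar> \<le> (\<Sum>j<dim_col A. \<bar>A $$ (i,j)\<bar>)"
    using assms by (intro member_le_sum) auto
  also have "\<dots> \<le> mat_l1_norm A"
    unfolding mat_l1_norm_def using assms by (intro member_le_sum sum_nonneg) auto
  finally show ?thesis .
qed

lemma mat_l1_norm_le:
  assumes "A \<in> carrier_mat nr nc" "\<And>i j. i < nr \<Longrightarrow> j < nc \<Longrightarrow> \<bar>A $$ (i,j)\<bar> \<le> c"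
  shows "mat_l1_norm A \<le> real nr * real nc * c"
proof -
  have "mat_l1_norm A = (\<Sum>i<nr. \<Sum>j<nc. \<bar>A $$ (i,j)\<bar>)"
    using assms(1) unfolding mat_l1_norm_def by auto
  also have "\<dots> \<le> (\<Sum>i<nr. \<Sum>j<nc. c)" by (intro sum_mono assms(2)) auto
  finally show ?thesis by simp
qed

lemma mat_l1_norm_diff:
  "A \<in> carrier_mat nr nc \<Longrightarrow> B \<in> carrier_mat nr nc \<Longrightarrow>
    mat_l1_norm (A - B) \<le> mat_l1_norm A + mat_l1_norm B"
  unfolding mat_l1_norm_def
  by (simp add: sum.distrib[symmetric]) (intro sum_mono, auto intro: abs_triangle_ineq4)

lemma mat_l1_norm_mult:
  assumes A: "A \<in> carrier_mat nr n" and B: "B \<in> carrier_mat n nc"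
  shows "mat_l1_norm (A * B) \<le> mat_l1_norm A * mat_l1_norm B"
proof -
  have "mat_l1_norm (A * B) = (\<Sum>i<nr. \<Sum>j<nc. \<bar>\<Sum>k<n. A $$ (i,k) * B $$ (k,j)\<bar>)"
    unfolding mat_l1_norm_def using A B by (simp add: index_mult_mat_sum[OF A B] del: index_mult_mat(1))
  also have "\<dots> \<le> (\<Sum>i<nr. \<Sum>j<nc. \<Sum>k<n. \<bar>A $$ (i,k)\<bar> * \<bar>B $$ (k,j)\<bar>)"
    by (intro sum_mono order_trans[OF sum_abs]) (simp add: abs_mult)
  also have "\<dots> = (\<Sum>i<nr. \<Sum>k<n. \<bar>A $$ (i,k)\<bar> * (\<Sum>j<nc. \<bar>B $$ (k,j)\<bar>))"
    by (simp add: sum.swap[of _ "{..<nc}"] sum_distrib_left)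
  also have "\<dots> \<le> (\<Sum>i<nr. \<Sum>k<n. \<bar>A $$ (i,k)\<bar> * mat_l1_norm B)"
  proof -
    have "mat_l1_norm B = (\<Sum>k<n. \<Sum>j<nc. \<bar>B $$ (k,j)\<bar>)"
      using B unfolding mat_l1_norm_def by auto
    then have "(\<Sum>j<nc. \<bar>B $$ (k,j)\<bar>) \<le> mat_l1_norm B" if "k < n" for k
      using that by (auto intro!: member_le_sum[where f = "\<lambda>k. \<Sum>j<nc. \<bar>B $$ (k,j)\<bar>"] sum_nonneg)
    then show ?thesis by (intro sum_mono mult_left_mono) auto
  qed
  also have "\<dots> = mat_l1_norm A * mat_l1_norm B"
    unfolding mat_l1_norm_def using A by (simp add: sum_distrib_right)
  finally show ?thesis .
qed

lemma abs_frob_inner_le: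
  assumes A: "A \<in> carrier_mat nr nc" and B: "B \<in> carrier_mat nr nc"
  shows "\<bar>frob_inner A B\<bar> \<le> mat_l1_norm A * mat_l1_norm B"
proof -
  have "\<bar>frob_inner A B\<bar> \<le> (\<Sum>i<nr. \<Sum>j<nc. \<bar>A $$ (i,j)\<bar> * \<bar>B $$ (i,j)\<bar>)"
    unfolding frob_inner_def using A
    by (simp, intro order_trans[OF sum_abs] sum_mono) (simp add: abs_mult)
  also have "\<dots> \<le> (\<Sum>i<nr. \<Sum>j<nc. \<bar>A $$ (i,j)\<bar> * mat_l1_norm B)"
    using B by (intro sum_mono mult_left_mono abs_index_le_mat_l1_norm) auto
  also have "\<dots> = mat_l1_norm A * mat_l1_norm B"
    unfolding mat_l1_norm_def using A by (simp add: sum_distrib_right)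
  finally show ?thesis .
qed

lemma sum_mult_const_plus_diag:
  fixes x :: "nat \<Rightarrow> real"
  assumes "k < n"
  shows "(\<Sum>l<n. (\<alpha> + (if k = l then \<beta> else 0)) * x l) = \<alpha> * (\<Sum>l<n. x l) + \<beta> * x k"
proof -
  have "(\<Sum>l<n. (\<alpha> + (if k = l then \<beta> else 0)) * x l)
      = (\<Sum>l<n. \<alpha> * x l + (if k = l then \<beta> * x l else 0))"
    by (intro sum.cong refl) (auto simp: algebra_simps)
  also have "\<dots> = \<alpha> * (\<Sum>l<n. x l) + \<beta> * x k"
    using assms by (simp add: sum.distrib sum_distrib_left)
  finally show ?thesis .
qed

lemma sum_lessThan_if_less:
  fixes n :: nat
  assumes "l \<le> n"
  shows "(\<Sum>k<n. if k < l then f k else 0) = (\<Sum>k<l. f k :: real)"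
proof -
  have "(\<Sum>k<n. if k < l then f k else 0) = (\<Sum>k\<in>{k\<in>{..<n}. k < l}. f k)"
    by (subst sum.inter_filter) auto
  also have "{k\<in>{..<n}. k < l} = {..<l}" using assms by auto
  finally show ?thesis .
qed

lemma sum_lessThan_if_greater:
  "(\<Sum>l<n. if k < l then f l else 0) = (\<Sum>l\<in>{Suc k..<n}. f l :: real)"
proof -
  have "(\<Sum>l<n. if k < l then f l else 0) = (\<Sum>l\<in>{l\<in>{..<n}. k < l}. f l)"
    by (subst sum.inter_filter) auto
  also have "{l\<in>{..<n}. k < l} = {Suc k..<n}" by auto
  finally show ?thesis .
qed

lemma sum_upper_triangle_shift:
  fixes f :: "nat \<Rightarrow> nat \<Rightarrow> real"
  shows "(\<Sum>p<P. \<Sum>q<P. if p < q then f p q else 0) = (\<Sum>\<mu>=1..P. \<Sum>\<nu>=\<mu>+1..P. f (\<mu>-1) (\<nu>-1))"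
proof -
  have "(\<Sum>q<P. if p < q then f p q else 0) = (\<Sum>\<nu>=Suc p+1..P. f p (\<nu>-1))" for p
  proof -
    have "(\<Sum>q<P. if p < q then f p q else 0) = (\<Sum>q\<in>{Suc p..<P}. f p (Suc q - 1))"
      by (simp add: sum.inter_filter[symmetric]) (intro sum.cong, auto)
    also have "\<dots> = (\<Sum>\<nu>=Suc p+1..P. f p (\<nu>-1))"
      by (subst sum.shift_bounds_Suc_ivl[symmetric]) (simp add: atLeastLessThanSuc_atLeastAtMost)
    finally show ?thesis .
  qed
  then have "(\<Sum>p<P. \<Sum>q<P. if p < q then f p q else 0) = (\<Sum>p<P. \<Sum>\<nu>=Suc p+1..P. f (Suc p - 1) (\<nu>-1))"
    by simp
  also have "\<dots> = (\<Sum>\<mu>=1..P. \<Sum>\<nu>=\<mu>+1..P. f (\<mu>-1) (\<nu>-1))"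
    by (subst lessThan_atLeast0, subst sum.shift_bounds_Suc_ivl[symmetric])
      (simp add: atLeastLessThanSuc_atLeastAtMost)
  finally show ?thesis .
qed

lemma square_sum_le_card_mult_sum_squares:
  fixes f :: "nat \<Rightarrow> real"
  shows "(\<Sum>i<n. f i)^2 \<le> real n * (\<Sum>i<n. (f i)^2)"
proof (cases "n = 0")
  case False
  define s where "s = (\<Sum>i<n. f i)"
  have "0 \<le> (\<Sum>i<n. (f i - s / real n)^2)" by (intro sum_nonneg) auto
  also have "\<dots> = (\<Sum>i<n. (f i)^2) - (2 * (s / real n)) * s + real n * (s / real n)^2"
  proof -
    have "(\<Sum>i<n. (f i - c)^2) = (\<Sum>i<n. (f i)^2 - (2 * c) * f i + c^2)" for c
      by (intro sum.cong refl) (simp add: power2_diff algebra_simps)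
    then show ?thesis by (simp add: sum.distrib sum_subtractf sum_distrib_left[symmetric] s_def)
  qed
  also have "\<dots> = (\<Sum>i<n. (f i)^2) - s^2 / real n"
    using False by (simp add: power2_eq_square field_simps)
  finally show ?thesis using False unfolding s_def by (simp add: field_simps)
qed simp

section \<open>Positive semi-definite square roots\<close>

lemma psd_quadratic_form_nonneg:
  fixes S :: "real mat"
  assumes "psd_mat n S"
  shows "0 \<le> (\<Sum>i<n. f i * (\<Sum>j<n. S $$ (i,j) * f j))"
proof -
  have S: "S \<in> carrier_mat n n" using assms unfolding psd_mat_def by auto
  have "0 \<le> vec n f \<bullet> (S *\<^sub>v vec n f)" using assms unfolding psd_mat_def by auto
  also have "\<dots> = (\<Sum>i<n. f i * (\<Sum>j<n. S $$ (i,j) * f j))"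
    using S by (simp add: scalar_prod_def lessThan_atLeast0 mult.commute)
  finally show ?thesis .
qed

lemma psd_index_sym:
  assumes "psd_mat n S" "i < n" "j < n"
  shows "S $$ (i,j) = S $$ (j,i)"
  using assms unfolding psd_mat_def by (metis carrier_matD index_transpose_mat(1))

lemma psd_neg_eigenvector_eq_0:
  fixes S :: "real mat"
  assumes S: "psd_mat n S" and c: "c > 0"
    and eig: "\<And>i. i < n \<Longrightarrow> (\<Sum>j<n. S $$ (i,j) * w j) = - c * w i" and i: "i < n"
  shows "w i = 0"
proof -
  have "0 \<le> (\<Sum>i<n. w i * (\<Sum>j<n. S $$ (i,j) * w j))" by (rule psd_quadratic_form_nonneg[OF S])
  also have "\<dots> = - c * (\<Sum>i<n. (w i)^2)"
    using eig by (simp add: sum_distrib_left power2_eq_square algebra_simps)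
  finally have "(\<Sum>i<n. (w i)^2) \<le> 0" using c by (simp add: mult_le_0_iff)
  then have "(\<Sum>i<n. (w i)^2) = 0" by (meson sum_nonneg zero_le_power2 order_antisym)
  then show ?thesis using i by (simp add: sum_nonneg_eq_0_iff)
qed

lemma psd_mult_self_kernel:
  fixes S :: "real mat"
  assumes S: "psd_mat n S" and ker: "\<And>i. i < n \<Longrightarrow> (\<Sum>j<n. S $$ (i,j) * u j) = 0"
    and u: "\<And>i. i < n \<Longrightarrow> u i = (\<Sum>j<n. S $$ (i,j) * v j)" and i: "i < n"
  shows "u i = 0"
proof -
  have "(\<Sum>i<n. (u i)^2) = (\<Sum>i<n. \<Sum>j<n. u i * S $$ (i,j) * v j)"
    by (simp add: u power2_eq_square sum_distrib_left mult.assoc)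
  also have "\<dots> = (\<Sum>j<n. \<Sum>i<n. v j * (S $$ (j,i) * u i))"
    by (subst sum.swap) (intro sum.cong refl, simp add: psd_index_sym[OF S])
  also have "\<dots> = (\<Sum>j<n. v j * (\<Sum>i<n. S $$ (j,i) * u i))"
    by (simp add: sum_distrib_left)
  also have "\<dots> = 0" by (simp add: ker)
  finally show ?thesis using i by (simp add: sum_nonneg_eq_0_iff)
qed

lemma psd_root_eigenvector:
  fixes S A :: "real mat"
  assumes S: "psd_mat n S" and SS: "S * S = A" and l: "l \<ge> 0"
    and eig: "\<And>i. i < n \<Longrightarrow> (\<Sum>j<n. A $$ (i,j) * v j) = l * v i" and i: "i < n"
  shows "(\<Sum>j<n. S $$ (i,j) * v j) = sqrt l * v i"
proof -
  have Sc: "S \<in> carrier_mat n n" using S unfolding psd_mat_def by auto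
  define u where "u i = (\<Sum>j<n. S $$ (i,j) * v j)" for i
  have Su: "(\<Sum>j<n. S $$ (i,j) * u j) = l * v i" if "i < n" for i
  proof -
    have "(\<Sum>j<n. S $$ (i,j) * u j) = (\<Sum>j<n. \<Sum>k<n. S $$ (i,j) * S $$ (j,k) * v k)"
      unfolding u_def by (simp add: sum_distrib_left mult.assoc)
    also have "\<dots> = (\<Sum>k<n. \<Sum>j<n. S $$ (i,j) * S $$ (j,k) * v k)" by (rule sum.swap)
    also have "\<dots> = (\<Sum>k<n. (\<Sum>j<n. S $$ (i,j) * S $$ (j,k)) * v k)"
      by (simp add: sum_distrib_right)
    also have "\<dots> = (\<Sum>k<n. A $$ (i,k) * v k)"
      using Sc that by (simp add: SS[symmetric] index_mult_mat_sum[OF Sc Sc] del: index_mult_mat(1))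
    finally show ?thesis using eig[OF that] by simp
  qed
  \<comment> \<open>For \<open>l > 0\<close>, \<open>u - sqrt l v\<close> is an eigenvector of \<open>S\<close> for \<open>- sqrt l\<close>, hence zero;
    for \<open>l = 0\<close>, \<open>S u = 0\<close> forces \<open>u = 0\<close>.\<close>
  show ?thesis
  proof (cases "l = 0")
    case True
    then show ?thesis using psd_mult_self_kernel[OF S _ _ i, of u v] Su u_def by simp
  next
    case False
    have "u i - sqrt l * v i = 0"
    proof (rule psd_neg_eigenvector_eq_0[OF S _ _ i])
      show "sqrt l > 0" using l False by simp
      show "(\<Sum>j<n. S $$ (k,j) * (u j - sqrt l * v j)) = - sqrt l * (u k - sqrt l * v k)"
        if "k < n" for k
      proof -
        have "(\<Sum>j<n. S $$ (k,j) * (u j - sqrt l * v j))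
            = (\<Sum>j<n. S $$ (k,j) * u j) - sqrt l * (\<Sum>j<n. S $$ (k,j) * v j)"
          by (simp add: right_diff_distrib sum_subtractf sum_distrib_left mult_ac)
        also have "\<dots> = l * v k - sqrt l * u k" by (simp only: u_def[of k, symmetric] Su[OF that])
        also have "\<dots> = - sqrt l * (u k - sqrt l * v k)"
          using l by (simp add: algebra_simps)
        finally show ?thesis .
      qed
    qed
    then show ?thesis unfolding u_def by simp
  qed
qed

lemma frob_sq_mult_psd_root:
  fixes S A X :: "real mat"
  assumes S: "psd_mat n S" and SS: "S * S = A" and X: "X \<in> carrier_mat n k"
  shows "frob_sq (S * X) = frob_inner (A * X) X"
proof -
  have Sc: "S \<in> carrier_mat n n" and St: "transpose_mat S = S"
    using S unfolding psd_mat_def by auto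
  have "frob_sq (S * X) = frob_inner (transpose_mat S * (S * X)) X"
    unfolding frob_sq_eq_frob_inner using Sc X by (intro frob_inner_move_left_factor) auto
  also have "transpose_mat S * (S * X) = A * X"
    using Sc X by (simp add: St SS[symmetric])
  finally show ?thesis .
qed

lemma frob_inner_symmetric_add:
  fixes A X D :: "real mat"
  assumes A: "A \<in> carrier_mat n n" "transpose_mat A = A"
    and X: "X \<in> carrier_mat n k" and D: "D \<in> carrier_mat n k"
  shows "frob_inner (A * (X + D)) (X + D)
    = frob_inner (A * X) X + 2 * frob_inner (A * X) D + frob_inner (A * D) D"
proof -
  have "frob_inner (A * D) X = frob_inner X (A * D)"
    using A X D by (intro frob_inner_commute) auto
  also have "\<dots> = frob_inner (A * X) D"
    using A X D by (simp add: frob_inner_move_left_factor[of X n k A n D])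
  finally have DX: "frob_inner (A * D) X = frob_inner (A * X) D" .
  have AX: "A * X \<in> carrier_mat n k" and AD: "A * D \<in> carrier_mat n k"
    using A X D by auto
  have "A * (X + D) = A * X + A * D" using A X D by (simp add: mult_add_distrib_mat)
  then have "frob_inner (A * (X + D)) (X + D)
      = frob_inner (X + D) (A * X) + frob_inner (X + D) (A * D)"
    using X D AX AD by (simp add: frob_inner_commute[of _ n k] frob_inner_add_right[of "X + D" n k])
  also have "\<dots> = frob_inner (A * X) X + frob_inner (A * X) D + frob_inner (A * D) X + frob_inner (A * D) D"
    using X D AX AD by (simp add: frob_inner_commute[of "X + D" n k] frob_inner_add_right)
  finally show ?thesis using DX by simp
qed

section \<open>The output correlation matrix\<close>

lemma Cout_mat_carrier [simp]: "Cout_mat P r \<in> carrier_mat P P"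
  unfolding Cout_mat_def by simp

lemma dim_Cout_mat [simp]: "dim_row (Cout_mat P r) = P" "dim_col (Cout_mat P r) = P"
  unfolding Cout_mat_def by simp_all

lemma index_Cout_mat:
  "i < P \<Longrightarrow> j < P \<Longrightarrow> Cout_mat P r $$ (i,j) = r + (if i = j then 1 - r else 0)"
  unfolding Cout_mat_def by simp

lemma Cout_mat_mult_sum:
  "k < P \<Longrightarrow> (\<Sum>l<P. Cout_mat P r $$ (k,l) * x l) = r * (\<Sum>l<P. x l) + (1 - r) * x k"
  by (simp add: index_Cout_mat sum_mult_const_plus_diag)

lemma transpose_Cout_mat: "transpose_mat (Cout_mat P r) = Cout_mat P r"
  by (rule eq_matI) (auto simp: index_Cout_mat)

lemma psd_Cout_mat_eigenvalues_nonneg: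
  assumes P: "P \<ge> 2" and psd: "psd_mat P (Cout_mat P r)"
  shows "0 \<le> 1 - r" "0 \<le> 1 + (real P - 1) * r"
proof -
  have quad: "0 \<le> r * (\<Sum>i<P. f i)^2 + (1 - r) * (\<Sum>i<P. (f i)^2)" for f
  proof -
    have "0 \<le> (\<Sum>i<P. f i * (\<Sum>j<P. Cout_mat P r $$ (i,j) * f j))"
      by (rule psd_quadratic_form_nonneg[OF psd])
    also have "\<dots> = (\<Sum>i<P. (r * (\<Sum>l<P. f l)) * f i + (1 - r) * (f i)^2)"
      by (intro sum.cong refl) (simp add: Cout_mat_mult_sum, simp add: algebra_simps power2_eq_square)
    also have "\<dots> = r * (\<Sum>i<P. f i)^2 + (1 - r) * (\<Sum>i<P. (f i)^2)"
      by (simp add: sum.distrib sum_distrib_left[symmetric] power2_eq_square)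
    finally show ?thesis .
  qed
  have "0 \<le> real P * (1 + (real P - 1) * r)"
    using quad[of "\<lambda>_. 1"] by (simp add: power2_eq_square algebra_simps)
  then show "0 \<le> 1 + (real P - 1) * r" using P by (simp add: zero_le_mult_iff)
  define f :: "nat \<Rightarrow> real" where "f i = (if i = 0 then 1 else 0) - (if i = 1 then 1 else 0)" for i
  have "(\<Sum>i<P. f i) = 0" using P unfolding f_def by (simp add: sum_subtractf)
  moreover have "(\<Sum>i<P. (f i)^2) = 2"
  proof -
    have "(f i)^2 = (if i = 0 then 1 else 0) + (if i = 1 then 1 else 0)" for i
      unfolding f_def by auto
    then show ?thesis using P by (simp add: sum.distrib)
  qed
  ultimately show "0 \<le> 1 - r" using quad[of f] by simp
qed

text \<open>\<open>Cout_mat P r\<close> has the eigenvalue \<open>1 + (P - 1) r\<close> on the constant vectors and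
  \<open>1 - r\<close> on their orthogonal complement; its root takes the square roots of both.\<close>

definition Cout_root :: "nat \<Rightarrow> real \<Rightarrow> real mat" where
  "Cout_root P r = mat P P (\<lambda>(i,j). (sqrt (1 + (real P - 1) * r) - sqrt (1 - r)) / real P
      + (if i = j then sqrt (1 - r) else 0))"

lemma Cout_root_carrier [simp]: "Cout_root P r \<in> carrier_mat P P"
  unfolding Cout_root_def by simp

lemma dim_Cout_root [simp]: "dim_row (Cout_root P r) = P" "dim_col (Cout_root P r) = P"
  unfolding Cout_root_def by simp_all

lemma index_Cout_root: "i < P \<Longrightarrow> j < P \<Longrightarrow> Cout_root P r $$ (i,j)
    = (sqrt (1 + (real P - 1) * r) - sqrt (1 - r)) / real P + (if i = j then sqrt (1 - r) else 0)"
  unfolding Cout_root_def by simp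

lemma Cout_root_mult_sum: "k < P \<Longrightarrow> (\<Sum>l<P. Cout_root P r $$ (k,l) * x l)
    = (sqrt (1 + (real P - 1) * r) - sqrt (1 - r)) / real P * (\<Sum>l<P. x l) + sqrt (1 - r) * x k"
  by (simp add: index_Cout_root sum_mult_const_plus_diag)

lemma Cout_root_psd:
  assumes P: "P > 0" and "0 \<le> 1 - r" "0 \<le> 1 + (real P - 1) * r"
  shows "psd_mat P (Cout_root P r)"
  unfolding psd_mat_def
proof (intro conjI ballI)
  show "Cout_root P r \<in> carrier_mat P P" by simp
  show "transpose_mat (Cout_root P r) = Cout_root P r"
    by (rule eq_matI) (auto simp: index_Cout_root)
  fix v :: "real vec" assume v: "v \<in> carrier_vec P"
  define a where "a = (sqrt (1 + (real P - 1) * r) - sqrt (1 - r)) / real P"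
  define b where "b = sqrt (1 - r)"
  define s where "s = (\<Sum>i<P. v $ i)"
  define q where "q = (\<Sum>i<P. (v $ i)^2)"
  have "v \<bullet> (Cout_root P r *\<^sub>v v) = (\<Sum>i<P. v $ i * (\<Sum>j<P. Cout_root P r $$ (i,j) * v $ j))"
    using v by (simp add: scalar_prod_def lessThan_atLeast0 mult.commute)
  also have "\<dots> = (\<Sum>i<P. v $ i * (a * s + b * v $ i))"
    by (intro sum.cong refl) (simp add: Cout_root_mult_sum a_def b_def s_def)
  also have "\<dots> = a * s^2 + b * q"
    by (simp add: s_def q_def algebra_simps sum.distrib sum_distrib_left power2_eq_square)
  also have "\<dots> = sqrt (1 + (real P - 1) * r) * (s^2 / real P) + b * (q - s^2 / real P)"
    unfolding a_def b_def using P by (simp add: field_simps)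
  also have "\<dots> \<ge> 0"
  proof -
    have "s^2 \<le> real P * q"
      unfolding s_def q_def by (rule square_sum_le_card_mult_sum_squares)
    then have "s^2 / real P \<le> q" using P by (simp add: divide_le_eq mult.commute)
    then show ?thesis using assms unfolding b_def by (intro add_nonneg_nonneg mult_nonneg_nonneg) auto
  qed
  finally show "0 \<le> v \<bullet> (Cout_root P r *\<^sub>v v)" .
qed

lemma Cout_root_square:
  assumes P: "P > 0" and l1: "0 \<le> 1 - r" and l2: "0 \<le> 1 + (real P - 1) * r"
  shows "Cout_root P r * Cout_root P r = Cout_mat P r"
proof (rule eq_matI)
  define a where "a = (sqrt (1 + (real P - 1) * r) - sqrt (1 - r)) / real P"
  define b where "b = sqrt (1 - r)"
  have "real P * a^2 + 2 * a * b
      = (sqrt (1 + (real P - 1) * r) - b) * (sqrt (1 + (real P - 1) * r) + b) / real P"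
    unfolding a_def b_def[symmetric] using P by (simp add: field_simps power2_eq_square)
  also have "\<dots> = ((1 + (real P - 1) * r) - (1 - r)) / real P"
    using l1 l2 unfolding b_def by (simp add: algebra_simps)
  also have "\<dots> = r" using P by (simp add: field_simps)
  finally have ab: "real P * a^2 + 2 * a * b = r" .
  have bb: "b * b = 1 - r" using l1 unfolding b_def by simp
  fix i j assume "i < dim_row (Cout_mat P r)" "j < dim_col (Cout_mat P r)"
  then have i: "i < P" and j: "j < P" by auto
  have "(Cout_root P r * Cout_root P r) $$ (i,j) = (\<Sum>k<P. Cout_root P r $$ (i,k) * Cout_root P r $$ (k,j))"
    by (rule index_mult_mat_sum[OF _ _ i j]) auto
  also have "\<dots> = a * (\<Sum>k<P. Cout_root P r $$ (k,j)) + b * Cout_root P r $$ (i,j)"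
    unfolding Cout_root_mult_sum[OF i] a_def b_def ..
  also have "\<dots> = a * (\<Sum>k<P. a + (if k = j then b else 0)) + b * (a + (if i = j then b else 0))"
    unfolding a_def b_def using i j by (simp add: index_Cout_root)
  also have "\<dots> = real P * a^2 + 2 * a * b + (if i = j then b * b else 0)"
    using j by (simp add: sum.distrib power2_eq_square algebra_simps)
  also have "\<dots> = Cout_mat P r $$ (i,j)" using i j ab bb by (simp add: index_Cout_mat)
  finally show "(Cout_root P r * Cout_root P r) $$ (i,j) = Cout_mat P r $$ (i,j)" .
qed auto

lemma psd_root_Cout_mat_unique:
  assumes P: "P > 0" and l1: "0 \<le> 1 - r" and l2: "0 \<le> 1 + (real P - 1) * r"
    and S: "psd_mat P S" and SS: "S * S = Cout_mat P r"
  shows "S = Cout_root P r"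
proof (rule eq_matI)
  fix i j assume "i < dim_row (Cout_root P r)" "j < dim_col (Cout_root P r)"
  then have i: "i < P" and j: "j < P" by (auto simp: Cout_root_def)
  define p :: "nat \<Rightarrow> real" where "p k = 1 / real P" for k
  define q :: "nat \<Rightarrow> real" where "q k = (if k = j then 1 else 0) - 1 / real P" for k
  have "(\<Sum>l<P. Cout_mat P r $$ (k,l) * p l) = (1 + (real P - 1) * r) * p k" if "k < P" for k
    using P that by (simp add: Cout_mat_mult_sum) (simp add: p_def field_simps)
  then have Sp: "(\<Sum>l<P. S $$ (i,l) * p l) = sqrt (1 + (real P - 1) * r) * p i"
    by (rule psd_root_eigenvector[OF S SS l2 _ i])
  have "(\<Sum>l<P. Cout_mat P r $$ (k,l) * q l) = (1 - r) * q k" if "k < P" for k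
    using P j that by (simp add: Cout_mat_mult_sum q_def sum_subtractf)
  then have Sq: "(\<Sum>l<P. S $$ (i,l) * q l) = sqrt (1 - r) * q i"
    by (rule psd_root_eigenvector[OF S SS l1 _ i])
  have "S $$ (i,l) * (p l + q l) = (if l = j then S $$ (i,l) else 0)" for l
    by (simp add: p_def q_def)
  then have "S $$ (i,j) = (\<Sum>l<P. S $$ (i,l) * (p l + q l))"
    using j by simp
  also have "\<dots> = sqrt (1 + (real P - 1) * r) * p i + sqrt (1 - r) * q i"
    using Sp Sq by (simp add: distrib_left sum.distrib)
  also have "\<dots> = Cout_root P r $$ (i,j)"
    using i j by (simp add: index_Cout_root p_def q_def field_simps)
  finally show "S $$ (i,j) = Cout_root P r $$ (i,j)" .
qed (use S in \<open>auto simp: psd_mat_def Cout_root_def\<close>)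

lemma psd_sqrt_Cout_mat:
  assumes "P > 0" "0 \<le> 1 - r" "0 \<le> 1 + (real P - 1) * r"
  shows "psd_sqrt P (Cout_mat P r) = Cout_root P r"
  unfolding psd_sqrt_def
proof (rule the_equality)
  show "psd_mat P (Cout_root P r) \<and> Cout_root P r * Cout_root P r = Cout_mat P r"
    using Cout_root_psd[OF assms] Cout_root_square[OF assms] by simp
qed (use psd_root_Cout_mat_unique[OF assms] in blast)

lemma eps_f_eq_frob_inner:
  assumes P: "P \<ge> 2" and psd: "psd_mat P (Cout_mat P r)" and C: "C \<in> carrier_mat P P"
  defines "X \<equiv> 1\<^sub>m P - mat_inv P (1\<^sub>m P + strict_upper C) * C"
  shows "eps_f P C (Cout_mat P r) = frob_inner (Cout_mat P r * X) X"
proof -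
  note eig = psd_Cout_mat_eigenvalues_nonneg[OF P psd]
  have "P > 0" using P by simp
  have "X \<in> carrier_mat P P"
    using C mat_inv_one_plus_strict_upper(1)[OF C] unfolding X_def by auto
  with Cout_root_psd[OF \<open>P > 0\<close> eig] Cout_root_square[OF \<open>P > 0\<close> eig] show ?thesis
    unfolding eps_f_def psd_sqrt_Cout_mat[OF \<open>P > 0\<close> eig] X_def[symmetric]
    by (rule frob_sq_mult_psd_root)
qed

section \<open>First-order perturbation of the residual\<close>

lemma eq_diff_of_add_eq_mat:
  fixes M N C :: "real mat"
  assumes "M \<in> carrier_mat nr nc" "N \<in> carrier_mat nr nc" "M + N = C"
  shows "M = C - N"
proof (rule eq_matI)
  fix i j assume "i < dim_row (C - N)" "j < dim_col (C - N)"
  then have "i < nr" "j < nc" using assms by auto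
  then show "M $$ (i,j) = (C - N) $$ (i,j)" using assms by auto
qed (use assms in auto)

lemma inverse_perturbation:
  fixes B0 B U0 EU :: "real mat"
  assumes c: "B0 \<in> carrier_mat n n" "B \<in> carrier_mat n n" "U0 \<in> carrier_mat n n" "EU \<in> carrier_mat n n"
    and inv: "B * (1\<^sub>m n + (U0 + EU)) = 1\<^sub>m n" and inv0: "(1\<^sub>m n + U0) * B0 = 1\<^sub>m n"
  shows "B = B0 - B * (EU * B0)"
proof -
  have "B * (1\<^sub>m n + U0) + B * EU = B * ((1\<^sub>m n + U0) + EU)"
    by (rule mult_add_distrib_mat[symmetric]) (use c in auto)
  also have "(1\<^sub>m n + U0) + EU = 1\<^sub>m n + (U0 + EU)" by (rule assoc_add_mat) (use c in auto)
  finally have BU0: "B * (1\<^sub>m n + U0) = 1\<^sub>m n - B * EU"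
    using inv c by (intro eq_diff_of_add_eq_mat) auto
  have "B = B * ((1\<^sub>m n + U0) * B0)" using inv0 c by simp
  also have "\<dots> = (B * (1\<^sub>m n + U0)) * B0" by (rule assoc_mult_mat[symmetric]) (use c in auto)
  also have "\<dots> = (1\<^sub>m n - B * EU) * B0" unfolding BU0 ..
  also have "\<dots> = B0 - B * (EU * B0)"
    using c by (simp add: minus_mult_distrib_mat[of "1\<^sub>m n" n n "B * EU" B0 n]
        assoc_mult_mat[of B n n EU n B0 n])
  finally show ?thesis .
qed

lemma residual_perturbation:
  fixes B0 B U0 EU C0 E :: "real mat"
  assumes c: "B0 \<in> carrier_mat n n" "B \<in> carrier_mat n n" "U0 \<in> carrier_mat n n"
    "EU \<in> carrier_mat n n" "C0 \<in> carrier_mat n n" "E \<in> carrier_mat n n"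
    and inv: "B * (1\<^sub>m n + (U0 + EU)) = 1\<^sub>m n" and inv0: "(1\<^sub>m n + U0) * B0 = 1\<^sub>m n"
  defines "K \<equiv> EU * (B0 * C0) - E"
  shows "1\<^sub>m n - B * (C0 + E) = (1\<^sub>m n - B0 * C0) + (B0 * K - B * (EU * (B0 * K)))"
proof -
  have K: "K \<in> carrier_mat n n" unfolding K_def using c by auto
  note hB = inverse_perturbation[OF c(1-4) inv inv0]
  have "B * C0 = (B0 - B * (EU * B0)) * C0" using hB by simp
  also have "\<dots> = B0 * C0 - B * (EU * (B0 * C0))"
    using c by (simp add: minus_mult_distrib_mat assoc_mult_mat[of B n n "EU * B0" n C0 n]
        assoc_mult_mat[of EU n n B0 n C0 n])
  finally have BC0: "B * C0 = B0 * C0 - B * (EU * (B0 * C0))" .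
  have "B * K = (B0 - B * (EU * B0)) * K" using hB by simp
  also have "\<dots> = B0 * K - B * (EU * (B0 * K))"
    using c K by (simp add: minus_mult_distrib_mat assoc_mult_mat[of B n n "EU * B0" n K n]
        assoc_mult_mat[of EU n n B0 n K n])
  finally have BK: "B * K = B0 * K - B * (EU * (B0 * K))" .
  have "B * K = B * (EU * (B0 * C0)) - B * E"
    unfolding K_def by (rule mult_minus_distrib_mat) (use c in auto)
  moreover have "B * (C0 + E) = B * C0 + B * E" using c by (simp add: mult_add_distrib_mat)
  ultimately show ?thesis unfolding BK[symmetric] BC0 by (intro eq_matI) (use c in auto)
qed

lemma perturbed_inverse_norm_le:
  fixes B0 B U0 EU :: "real mat"
  assumes c: "B0 \<in> carrier_mat n n" "B \<in> carrier_mat n n" "U0 \<in> carrier_mat n n" "EU \<in> carrier_mat n n"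
    and inv: "B * (1\<^sub>m n + (U0 + EU)) = 1\<^sub>m n" and inv0: "(1\<^sub>m n + U0) * B0 = 1\<^sub>m n"
    and small: "mat_l1_norm EU * mat_l1_norm B0 \<le> 1/2"
  shows "mat_l1_norm B \<le> 2 * mat_l1_norm B0"
proof -
  have "mat_l1_norm B \<le> mat_l1_norm B0 + mat_l1_norm (B * (EU * B0))"
    using c by (subst inverse_perturbation[OF c inv inv0]) (rule mat_l1_norm_diff, auto)
  also have "mat_l1_norm (B * (EU * B0)) \<le> mat_l1_norm B * (mat_l1_norm EU * mat_l1_norm B0)"
    using c by (meson mat_l1_norm_mult mat_l1_norm_nonneg mult_carrier_mat mult_left_mono order_trans)
  also have "\<dots> \<le> mat_l1_norm B * (1/2)"
    using small by (intro mult_left_mono mat_l1_norm_nonneg)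
  finally show ?thesis by simp
qed

lemma residual_perturbation_norm_le:
  fixes B0 B U0 EU C0 E :: "real mat"
  assumes c: "B0 \<in> carrier_mat n n" "B \<in> carrier_mat n n" "U0 \<in> carrier_mat n n"
    "EU \<in> carrier_mat n n" "C0 \<in> carrier_mat n n" "E \<in> carrier_mat n n"
    and inv: "B * (1\<^sub>m n + (U0 + EU)) = 1\<^sub>m n" and inv0: "(1\<^sub>m n + U0) * B0 = 1\<^sub>m n"
    and EU: "mat_l1_norm EU \<le> e" and E: "mat_l1_norm E \<le> e"
    and small: "e * mat_l1_norm B0 \<le> 1/2"
  defines "K \<equiv> EU * (B0 * C0) - E" and "k \<equiv> e * (mat_l1_norm B0 * mat_l1_norm C0 + 1)"
  shows "mat_l1_norm (B * (EU * (B0 * K))) \<le> 2 * mat_l1_norm B0 ^ 2 * e * k"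
    and "mat_l1_norm (B0 * K - B * (EU * (B0 * K))) \<le> 2 * mat_l1_norm B0 * k"
proof -
  define b0 c0 where "b0 = mat_l1_norm B0" and "c0 = mat_l1_norm C0"
  have cK: "K \<in> carrier_mat n n" unfolding K_def using c by auto
  have e0: "0 \<le> e" using EU mat_l1_norm_nonneg[of EU] by linarith
  have nonneg: "0 \<le> b0" "0 \<le> c0" "0 \<le> e"
    unfolding b0_def c0_def by (rule mat_l1_norm_nonneg, rule mat_l1_norm_nonneg, rule e0)
  then have k0: "0 \<le> k" unfolding k_def b0_def c0_def by simp
  have "mat_l1_norm EU * mat_l1_norm B0 \<le> 1/2"
    using small EU mat_l1_norm_nonneg[of B0] by (meson mult_right_mono order_trans)
  then have nB: "mat_l1_norm B \<le> 2 * b0"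
    unfolding b0_def by (rule perturbed_inverse_norm_le[OF c(1-4) inv inv0])
  have "mat_l1_norm K \<le> mat_l1_norm EU * (b0 * c0) + mat_l1_norm E"
    unfolding K_def b0_def c0_def using c
    by (meson add_mono mat_l1_norm_diff mat_l1_norm_mult mat_l1_norm_nonneg mult_carrier_mat
        mult_left_mono order_refl order_trans)
  also have "\<dots> \<le> e * (b0 * c0) + e"
    using EU E nonneg by (intro add_mono mult_right_mono) auto
  finally have nK: "mat_l1_norm K \<le> k" unfolding k_def b0_def c0_def by (simp add: algebra_simps)
  have nB0K: "mat_l1_norm (B0 * K) \<le> b0 * k"
    unfolding b0_def using c cK nK
    by (meson mat_l1_norm_mult mat_l1_norm_nonneg mult_left_mono order_trans)
  have "mat_l1_norm (B * (EU * (B0 * K))) \<le> mat_l1_norm B * (mat_l1_norm EU * mat_l1_norm (B0 * K))"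
    using c cK by (meson mat_l1_norm_mult mat_l1_norm_nonneg mult_carrier_mat mult_left_mono order_trans)
  also have "\<dots> \<le> (2 * b0) * (e * (b0 * k))"
    using nB EU nB0K nonneg by (intro mult_mono) (auto intro: mat_l1_norm_nonneg mult_nonneg_nonneg)
  finally show nR: "mat_l1_norm (B * (EU * (B0 * K))) \<le> 2 * mat_l1_norm B0 ^ 2 * e * k"
    unfolding b0_def by (simp add: power2_eq_square mult_ac)
  have "mat_l1_norm (B0 * K - B * (EU * (B0 * K))) \<le> b0 * k + 2 * b0^2 * e * k"
    using c cK nB0K nR unfolding b0_def by (meson add_mono mat_l1_norm_diff mult_carrier_mat order_trans)
  also have "\<dots> = b0 * k * (1 + 2 * (e * b0))" by (simp add: power2_eq_square algebra_simps)
  also have "\<dots> \<le> b0 * k * 2"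
    using small nonneg k0 unfolding b0_def by (intro mult_left_mono) auto
  finally show "mat_l1_norm (B0 * K - B * (EU * (B0 * K))) \<le> 2 * mat_l1_norm B0 * k"
    unfolding b0_def by simp
qed

lemma residual_quadratic_form_expansion:
  fixes A B0 B U0 EU C0 E :: "real mat"
  assumes c: "A \<in> carrier_mat n n" "B0 \<in> carrier_mat n n" "B \<in> carrier_mat n n"
    "U0 \<in> carrier_mat n n" "EU \<in> carrier_mat n n" "C0 \<in> carrier_mat n n" "E \<in> carrier_mat n n"
    and A: "transpose_mat A = A"
    and inv: "B * (1\<^sub>m n + (U0 + EU)) = 1\<^sub>m n" and inv0: "(1\<^sub>m n + U0) * B0 = 1\<^sub>m n"
    and EU: "mat_l1_norm EU \<le> e" and E: "mat_l1_norm E \<le> e"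
    and small: "e * mat_l1_norm B0 \<le> 1/2"
  defines "X0 \<equiv> 1\<^sub>m n - B0 * C0" and "X \<equiv> 1\<^sub>m n - B * (C0 + E)"
    and "K \<equiv> EU * (B0 * C0) - E"
  shows "\<bar>frob_inner (A * X) X - frob_inner (A * X0) X0 - 2 * frob_inner (A * X0) (B0 * K)\<bar>
    \<le> 4 * mat_l1_norm A * mat_l1_norm B0 ^ 2 * (mat_l1_norm B0 * mat_l1_norm C0 + 1)
        * (mat_l1_norm X0 + mat_l1_norm B0 * mat_l1_norm C0 + 1) * e^2"
proof -
  define a b0 x0 k where "a = mat_l1_norm A" and "b0 = mat_l1_norm B0"
    and "x0 = mat_l1_norm X0" and "k = e * (mat_l1_norm B0 * mat_l1_norm C0 + 1)"
  define R where "R = B * (EU * (B0 * K))"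
  define D where "D = B0 * K - R"
  have cK: "K \<in> carrier_mat n n" and cR: "R \<in> carrier_mat n n" and cD: "D \<in> carrier_mat n n"
    and cX0: "X0 \<in> carrier_mat n n"
    unfolding K_def R_def D_def X0_def using c by auto
  have e0: "0 \<le> e" using EU mat_l1_norm_nonneg[of EU] by linarith
  have nonneg: "0 \<le> a" "0 \<le> x0" "0 \<le> b0" "0 \<le> mat_l1_norm D"
    unfolding a_def x0_def b0_def by (rule mat_l1_norm_nonneg)+
  have k0: "0 \<le> k" unfolding k_def using e0 by (simp add: mat_l1_norm_nonneg)
  note nR = residual_perturbation_norm_le(1)[OF c(2-7) inv inv0 EU E small,
      folded K_def R_def, folded k_def, folded b0_def]
  note nD = residual_perturbation_norm_le(2)[OF c(2-7) inv inv0 EU E small,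
      folded K_def R_def D_def, folded k_def, folded b0_def]
  have "X = X0 + D"
    unfolding X_def X0_def D_def R_def K_def
    by (rule residual_perturbation[OF c(2-7) inv inv0])
  then have "frob_inner (A * X) X = frob_inner (A * X0) X0 + 2 * frob_inner (A * X0) D + frob_inner (A * D) D"
    using frob_inner_symmetric_add[OF c(1) A cX0 cD] by simp
  moreover have "frob_inner (A * X0) D = frob_inner (A * X0) (B0 * K) - frob_inner (A * X0) R"
    unfolding D_def by (rule frob_inner_diff_right) (use c cK cR cX0 in auto)
  ultimately have "frob_inner (A * X) X - frob_inner (A * X0) X0 - 2 * frob_inner (A * X0) (B0 * K)
      = frob_inner (A * D) D - 2 * frob_inner (A * X0) R"
    by simp
  also have "\<bar>\<dots>\<bar> \<le> a * mat_l1_norm D * mat_l1_norm D + 2 * (a * x0 * mat_l1_norm R)"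
  proof -
    have "\<bar>frob_inner (A * Y) Z\<bar> \<le> a * mat_l1_norm Y * mat_l1_norm Z"
      if "Y \<in> carrier_mat n n" "Z \<in> carrier_mat n n" for Y Z
      using that c abs_frob_inner_le[of "A * Y" n n Z] mat_l1_norm_mult[of A n n Y n]
        mat_l1_norm_nonneg[of Z] unfolding a_def
      by (meson mult_carrier_mat mult_right_mono order_trans)
    from this[OF cD cD] this[OF cX0 cR] show ?thesis unfolding x0_def by linarith
  qed
  also have "\<dots> \<le> a * (2 * b0 * k) * (2 * b0 * k) + 2 * (a * x0 * (2 * b0^2 * e * k))"
  proof -
    have "mat_l1_norm D * mat_l1_norm D \<le> (2 * b0 * k) * (2 * b0 * k)"
      using nD nonneg by (intro mult_mono) auto
    then have "a * mat_l1_norm D * mat_l1_norm D \<le> a * (2 * b0 * k) * (2 * b0 * k)"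
      using nonneg by (simp add: mult.assoc mult_left_mono)
    moreover have "a * x0 * mat_l1_norm R \<le> a * x0 * (2 * b0^2 * e * k)"
      using nR nonneg by (intro mult_left_mono) auto
    ultimately show ?thesis by linarith
  qed
  also have "\<dots> = 4 * a * b0^2 * (b0 * mat_l1_norm C0 + 1) * (x0 + b0 * mat_l1_norm C0 + 1) * e^2"
    unfolding k_def b0_def by (simp add: power2_eq_square algebra_simps)
  finally show ?thesis unfolding a_def b0_def x0_def .
qed

section \<open>The coefficients \<open>G\<close>\<close>

lemma Cin_mat_carrier [simp]: "Cin_mat P m dM \<in> carrier_mat P P"
  unfolding Cin_mat_def by simp

lemma dim_Cin_mat [simp]: "dim_row (Cin_mat P m dM) = P" "dim_col (Cin_mat P m dM) = P"
  unfolding Cin_mat_def by simp_all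

lemma index_Cin_mat [simp]: "i < P \<Longrightarrow> j < P \<Longrightarrow> Cin_mat P m dM $$ (i,j) = (if i = j then 1
    else if i < j then m + dM (i+1) (j+1) else m + dM (j+1) (i+1))"
  unfolding Cin_mat_def by simp

abbreviation Cin0_mat :: "nat \<Rightarrow> real \<Rightarrow> real mat" where
  "Cin0_mat P m \<equiv> Cin_mat P m (\<lambda>_ _. 0)"

definition B0_mat :: "nat \<Rightarrow> real \<Rightarrow> real mat" where
  "B0_mat P m = mat_inv P (1\<^sub>m P + strict_upper (Cin0_mat P m))"

definition X0_mat :: "nat \<Rightarrow> real \<Rightarrow> real mat" where
  "X0_mat P m = 1\<^sub>m P - B0_mat P m * Cin0_mat P m"

text \<open>Half the gradient of \<open>eps_f\<close> in \<open>dM\<close> at \<open>dM = 0\<close>, with the paper's 1-based task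
  indices: moving \<open>B0\<close> and \<open>B0 * C0\<close> across the Frobenius product turns the linear term
  \<open>frob_inner (Cout * X0) (B0 * (EU * B0 * C0 - E))\<close> into \<open>frob_inner V EU - frob_inner W E\<close>.\<close>

definition G_coeff :: "nat \<Rightarrow> real \<Rightarrow> real \<Rightarrow> nat \<Rightarrow> nat \<Rightarrow> real" where
  "G_coeff P m r \<mu> \<nu> =
    (let W = transpose_mat (B0_mat P m) * (Cout_mat P r * X0_mat P m);
         V = W * transpose_mat (B0_mat P m * Cin0_mat P m)
     in V $$ (\<mu>-1, \<nu>-1) - W $$ (\<mu>-1, \<nu>-1) - W $$ (\<nu>-1, \<mu>-1))"

lemma B0_mat_inverse:
  "B0_mat P m \<in> carrier_mat P P"
  "B0_mat P m * (1\<^sub>m P + strict_upper (Cin0_mat P m)) = 1\<^sub>m P"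
  "(1\<^sub>m P + strict_upper (Cin0_mat P m)) * B0_mat P m = 1\<^sub>m P"
  unfolding B0_mat_def by (rule mat_inv_one_plus_strict_upper[OF Cin_mat_carrier])+

lemma dim_B0_mat [simp]: "dim_row (B0_mat P m) = P" "dim_col (B0_mat P m) = P"
  using B0_mat_inverse(1) by auto

lemma X0_mat_carrier [simp]: "X0_mat P m \<in> carrier_mat P P"
  unfolding X0_mat_def by (rule minus_carrier_mat) (use B0_mat_inverse(1)[of P m] in auto)

lemma frob_inner_Cin_mat_perturbation:
  assumes V: "V \<in> carrier_mat P P" and W: "W \<in> carrier_mat P P"
  shows "frob_inner V (strict_upper (Cin_mat P m dM) - strict_upper (Cin0_mat P m))
      - frob_inner W (Cin_mat P m dM - Cin0_mat P m)
    = (\<Sum>\<mu>=1..P. \<Sum>\<nu>=\<mu>+1..P. (V $$ (\<mu>-1,\<nu>-1) - W $$ (\<mu>-1,\<nu>-1) - W $$ (\<nu>-1,\<mu>-1)) * dM \<mu> \<nu>)"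
proof -
  define f where "f p q = (V $$ (p,q) - W $$ (p,q) - W $$ (q,p)) * dM (p+1) (q+1)" for p q
  have EU: "(strict_upper (Cin_mat P m dM) - strict_upper (Cin0_mat P m)) $$ (p,q)
      = (if p < q then dM (p+1) (q+1) else 0)" if "p < P" "q < P" for p q
    using that by simp
  have E: "(Cin_mat P m dM - Cin0_mat P m) $$ (p,q)
      = (if p < q then dM (p+1) (q+1) else 0) + (if q < p then dM (q+1) (p+1) else 0)"
    if "p < P" "q < P" for p q
    using that by simp
  have "frob_inner V (strict_upper (Cin_mat P m dM) - strict_upper (Cin0_mat P m))
      - frob_inner W (Cin_mat P m dM - Cin0_mat P m)
    = (\<Sum>p<P. \<Sum>q<P. (if p < q then (V $$ (p,q) - W $$ (p,q)) * dM (p+1) (q+1) else 0)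
        - (if q < p then W $$ (p,q) * dM (q+1) (p+1) else 0))"
    using V W unfolding frob_inner_def
    by (simp add: EU E sum_subtractf[symmetric]) (intro sum.cong refl, auto simp: algebra_simps)
  also have "\<dots> = (\<Sum>p<P. \<Sum>q<P. if p < q then (V $$ (p,q) - W $$ (p,q)) * dM (p+1) (q+1) else 0)
      - (\<Sum>q<P. \<Sum>p<P. if q < p then W $$ (p,q) * dM (q+1) (p+1) else 0)"
    by (simp only: sum_subtractf sum.swap[of "\<lambda>p q. if q < p then W $$ (p,q) * dM (q+1) (p+1) else 0"])
  also have "\<dots> = (\<Sum>p<P. \<Sum>q<P. if p < q then f p q else 0)"
    unfolding f_def by (simp add: sum_subtractf[symmetric] algebra_simps if_distrib cong: if_cong)
  also have "\<dots> = (\<Sum>\<mu>=1..P. \<Sum>\<nu>=\<mu>+1..P. (V $$ (\<mu>-1,\<nu>-1) - W $$ (\<mu>-1,\<nu>-1) - W $$ (\<nu>-1,\<mu>-1)) * dM \<mu> \<nu>)"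
    unfolding sum_upper_triangle_shift f_def by (intro sum.cong refl) auto
  finally show ?thesis .
qed

lemma G_coeff_linear_term:
  fixes P :: nat and m r :: real and dM :: "nat \<Rightarrow> nat \<Rightarrow> real"
  defines "C \<equiv> Cin_mat P m dM" and "C0 \<equiv> Cin0_mat P m" and "B0 \<equiv> B0_mat P m"
  shows "frob_inner (Cout_mat P r * X0_mat P m)
      (B0 * ((strict_upper C - strict_upper C0) * (B0 * C0) - (C - C0)))
    = (\<Sum>\<mu>=1..P. \<Sum>\<nu>=\<mu>+1..P. G_coeff P m r \<mu> \<nu> * dM \<mu> \<nu>)"
proof -
  define W where "W = transpose_mat B0 * (Cout_mat P r * X0_mat P m)"
  define V where "V = W * transpose_mat (B0 * C0)"
  have c: "B0 \<in> carrier_mat P P" "C \<in> carrier_mat P P" "C0 \<in> carrier_mat P P"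
    "W \<in> carrier_mat P P" "V \<in> carrier_mat P P"
    unfolding W_def V_def B0_def C_def C0_def using B0_mat_inverse(1)
    by (auto intro!: mult_carrier_mat[of _ P P])
  have H: "Cout_mat P r * X0_mat P m \<in> carrier_mat P P"
    by (rule mult_carrier_mat[OF Cout_mat_carrier X0_mat_carrier])
  have "frob_inner (Cout_mat P r * X0_mat P m) (B0 * ((strict_upper C - strict_upper C0) * (B0 * C0) - (C - C0)))
      = frob_inner W ((strict_upper C - strict_upper C0) * (B0 * C0) - (C - C0))"
    unfolding W_def using c H by (intro frob_inner_move_left_factor) (auto intro!: minus_carrier_mat)
  also have "\<dots> = frob_inner W ((strict_upper C - strict_upper C0) * (B0 * C0)) - frob_inner W (C - C0)"
    using c by (intro frob_inner_diff_right[of _ P P]) (auto intro!: minus_carrier_mat)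
  also have "frob_inner W ((strict_upper C - strict_upper C0) * (B0 * C0))
      = frob_inner V (strict_upper C - strict_upper C0)"
    unfolding V_def using c by (intro frob_inner_move_right_factor[of _ P P _ P]) auto
  also have "frob_inner V (strict_upper C - strict_upper C0) - frob_inner W (C - C0)
      = (\<Sum>\<mu>=1..P. \<Sum>\<nu>=\<mu>+1..P. G_coeff P m r \<mu> \<nu> * dM \<mu> \<nu>)"
    unfolding C_def C0_def frob_inner_Cin_mat_perturbation[OF c(5,4)]
    unfolding G_coeff_def Let_def W_def V_def B0_def C0_def by (simp add: mult.commute)
  finally show ?thesis .
qed

lemma Cin_mat_perturbation_norm_le:
  assumes \<delta>: "0 \<le> \<delta>" and dM: "\<And>\<mu> \<nu>. 1 \<le> \<mu> \<Longrightarrow> \<mu> < \<nu> \<Longrightarrow> \<nu> \<le> P \<Longrightarrow> \<bar>dM \<mu> \<nu>\<bar> \<le> \<delta>"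
  shows "mat_l1_norm (Cin_mat P m dM - Cin0_mat P m) \<le> real P * real P * \<delta>"
    "mat_l1_norm (strict_upper (Cin_mat P m dM) - strict_upper (Cin0_mat P m)) \<le> real P * real P * \<delta>"
proof -
  have "\<bar>dM (i+1) (j+1)\<bar> \<le> \<delta>" if "i < j" "j < P" for i j using dM that by simp
  then show "mat_l1_norm (Cin_mat P m dM - Cin0_mat P m) \<le> real P * real P * \<delta>"
    "mat_l1_norm (strict_upper (Cin_mat P m dM) - strict_upper (Cin0_mat P m)) \<le> real P * real P * \<delta>"
    using \<delta> by (auto intro!: mat_l1_norm_le[of _ P P])
qed

lemma eps_f_expansion:
  fixes P :: nat and m r \<delta> :: real
  assumes P: "P \<ge> 2" and psd: "psd_mat P (Cout_mat P r)"
    and \<delta>: "0 \<le> \<delta>" and dM: "\<And>\<mu> \<nu>. 1 \<le> \<mu> \<Longrightarrow> \<mu> < \<nu> \<Longrightarrow> \<nu> \<le> P \<Longrightarrow> \<bar>dM \<mu> \<nu>\<bar> \<le> \<delta>"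
    and small: "real P * real P * \<delta> * mat_l1_norm (B0_mat P m) \<le> 1/2"
  defines "b0 \<equiv> mat_l1_norm (B0_mat P m)" and "c0 \<equiv> mat_l1_norm (Cin0_mat P m)"
  shows "\<bar>eps_f P (Cin_mat P m dM) (Cout_mat P r) - eps_f P (Cin0_mat P m) (Cout_mat P r)
      - 2 * (\<Sum>\<mu>=1..P. \<Sum>\<nu>=\<mu>+1..P. G_coeff P m r \<mu> \<nu> * dM \<mu> \<nu>)\<bar>
    \<le> 4 * mat_l1_norm (Cout_mat P r) * b0^2 * (b0 * c0 + 1) * (mat_l1_norm (X0_mat P m) + b0 * c0 + 1)
        * (real P * real P * \<delta>)^2"
proof -
  define C C0 B0 B where "C = Cin_mat P m dM" and "C0 = Cin0_mat P m" and "B0 = B0_mat P m"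
    and "B = mat_inv P (1\<^sub>m P + strict_upper C)"
  define U0 EU E where "U0 = strict_upper C0" and "EU = strict_upper C - U0" and "E = C - C0"
  have c: "C \<in> carrier_mat P P" "C0 \<in> carrier_mat P P" "B0 \<in> carrier_mat P P"
    "B \<in> carrier_mat P P" "U0 \<in> carrier_mat P P" "EU \<in> carrier_mat P P" "E \<in> carrier_mat P P"
    unfolding C_def C0_def B0_def B_def U0_def EU_def E_def
    using B0_mat_inverse(1) mat_inv_one_plus_strict_upper(1)[OF Cin_mat_carrier]
    by (auto intro!: minus_carrier_mat)
  have "U0 + EU = strict_upper C" unfolding EU_def by (rule eq_matI) (use c in auto)
  then have inv: "B * (1\<^sub>m P + (U0 + EU)) = 1\<^sub>m P"
    unfolding B_def using mat_inv_one_plus_strict_upper(2)[OF c(1)] by simp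
  have inv0: "(1\<^sub>m P + U0) * B0 = 1\<^sub>m P"
    unfolding U0_def B0_def C0_def by (rule B0_mat_inverse(3))
  have "C0 + E = C" unfolding E_def by (rule eq_matI) (use c in auto)
  then have "eps_f P C (Cout_mat P r) = frob_inner (Cout_mat P r * (1\<^sub>m P - B * (C0 + E))) (1\<^sub>m P - B * (C0 + E))"
    unfolding B_def by (simp add: eps_f_eq_frob_inner[OF P psd c(1)])
  moreover have "eps_f P C0 (Cout_mat P r) = frob_inner (Cout_mat P r * X0_mat P m) (X0_mat P m)"
    unfolding C0_def X0_mat_def B0_mat_def by (rule eps_f_eq_frob_inner[OF P psd Cin_mat_carrier])
  moreover have "frob_inner (Cout_mat P r * X0_mat P m) (B0 * (EU * (B0 * C0) - E))
      = (\<Sum>\<mu>=1..P. \<Sum>\<nu>=\<mu>+1..P. G_coeff P m r \<mu> \<nu> * dM \<mu> \<nu>)"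
    unfolding EU_def U0_def E_def B0_def C_def C0_def by (rule G_coeff_linear_term)
  moreover have "\<bar>frob_inner (Cout_mat P r * (1\<^sub>m P - B * (C0 + E))) (1\<^sub>m P - B * (C0 + E))
      - frob_inner (Cout_mat P r * X0_mat P m) (X0_mat P m)
      - 2 * frob_inner (Cout_mat P r * X0_mat P m) (B0 * (EU * (B0 * C0) - E))\<bar>
    \<le> 4 * mat_l1_norm (Cout_mat P r) * b0^2 * (b0 * c0 + 1) * (mat_l1_norm (X0_mat P m) + b0 * c0 + 1)
        * (real P * real P * \<delta>)^2"
  proof -
    have "mat_l1_norm EU \<le> real P * real P * \<delta>" "mat_l1_norm E \<le> real P * real P * \<delta>"
      unfolding EU_def U0_def E_def C_def C0_def
      using Cin_mat_perturbation_norm_le[where P = P and m = m and dM = dM, OF \<delta> dM] by auto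
    moreover have "real P * real P * \<delta> * mat_l1_norm B0 \<le> 1/2" using small B0_def by simp
    moreover have "b0 = mat_l1_norm B0" "c0 = mat_l1_norm C0" "X0_mat P m = 1\<^sub>m P - B0 * C0"
      by (simp_all add: b0_def c0_def B0_def C0_def X0_mat_def)
    ultimately show ?thesis
      by (simp only:) (rule residual_quadratic_form_expansion[OF Cout_mat_carrier c(3,4,5,6,2,7)
          transpose_Cout_mat inv inv0])
  qed
  ultimately show ?thesis unfolding C_def C0_def by simp
qed

section \<open>Closed form for \<open>\<rho> = 1\<close>\<close>

text \<open>Closed forms for the solution \<open>s = baseline_sol / (1 + a)\<close> of the triangular system
  \<open>(1 + strict_upper C0) s = baseline_rhs\<close>, with \<open>a = 1 - m\<close>, and for the tail sums
  \<open>baseline_tail k = (1 - a) * (\<Sum>l\<in>{k..<P}. baseline_sol l)\<close> met when solving it from the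
  last row upwards.\<close>

definition baseline_rhs :: "nat \<Rightarrow> real \<Rightarrow> nat \<Rightarrow> real" where
  "baseline_rhs P a k = (1 - a) * real P * a^P - a + 2 * a^(P+1) - a^(k+2)"

definition baseline_sol :: "nat \<Rightarrow> real \<Rightarrow> nat \<Rightarrow> real" where
  "baseline_sol P a k = - (a^(k+2)) - (1 + a) * a^(P-k) + (1 + a) * (1 - a) * real P * a^(2*P-k-1)
    + (2 + a) * a^(2*P-k)"

definition baseline_tail :: "nat \<Rightarrow> real \<Rightarrow> nat \<Rightarrow> real" where
  "baseline_tail P a k = - (a^(k+2) - a^(P+2)) - (1 + a) * (a - a^(P-k+1))
    + (1 + a) * (1 - a) * real P * (a^P - a^(2*P-k)) + (2 + a) * (a^(P+1) - a^(2*P-k+1))"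

text \<open>Once \<open>P = k + 1 + d\<close>, every exponent is linear in \<open>k\<close> and \<open>d\<close>; naming \<open>a\<^sup>k\<close> and
  \<open>a\<^sup>d\<close> turns the identities below into polynomial ones.\<close>

lemma baseline_exponents:
  assumes "P = k + 1 + d"
  shows "P - k = d + 1" "2*P-k-1 = k+1+(d+d)" "2*P-k = k+2+(d+d)" "P - k + 1 = d + 2"
    "2*P-k+1 = k+3+(d+d)" "P - Suc k = d" "2*P - Suc k = k+1+(d+d)" "P - Suc k + 1 = d + 1"
    "2*P - Suc k + 1 = k+2+(d+d)" "P + 2 = k + 3 + d" "P + 1 = k + 2 + d" "Suc k + 2 = k + 3"
    "k + 2 + (d + d) - 1 = k + 1 + (d + d)"
  using assms by auto

lemma baseline_tail_step:
  assumes "k < P"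
  shows "baseline_tail P a k = (1 - a) * baseline_sol P a k + baseline_tail P a (Suc k)"
proof -
  obtain d where P: "P = k + 1 + d" using assms less_imp_Suc_add by fastforce
  define x y where "x = a^k" and "y = a^d"
  have aP: "a^P = x * a * y" unfolding x_def y_def P by (simp add: power_add)
  show ?thesis
    unfolding baseline_tail_def baseline_sol_def baseline_exponents[OF P] aP
    unfolding power_add power_one_right power_Suc x_def[symmetric] y_def[symmetric]
    by (simp add: algebra_simps power2_eq_square power3_eq_cube)
qed

lemma baseline_sol_tail:
  assumes "k < P"
  shows "baseline_sol P a k + baseline_tail P a (Suc k) = (1 + a) * baseline_rhs P a k"
proof -
  obtain d where P: "P = k + 1 + d" using assms less_imp_Suc_add by fastforce
  define x y where "x = a^k" and "y = a^d"
  have aP: "a^P = x * a * y" unfolding x_def y_def P by (simp add: power_add)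
  show ?thesis
    unfolding baseline_tail_def baseline_sol_def baseline_rhs_def baseline_exponents[OF P] aP
    unfolding power_add power_one_right power_Suc x_def[symmetric] y_def[symmetric]
    by (simp add: algebra_simps power2_eq_square power3_eq_cube)
qed

lemma baseline_tail_eq_sum:
  assumes "k \<le> P"
  shows "(1 - a) * (\<Sum>l\<in>{k..<P}. baseline_sol P a l) = baseline_tail P a k"
  using assms
proof (induction "P - k" arbitrary: k)
  case 0
  then show ?case by (simp add: baseline_tail_def mult_2)
next
  case (Suc n)
  then have k: "k < P" by simp
  have "(1 - a) * (\<Sum>l\<in>{k..<P}. baseline_sol P a l)
      = (1 - a) * baseline_sol P a k + (1 - a) * (\<Sum>l\<in>{Suc k..<P}. baseline_sol P a l)"
    using k by (simp add: sum.atLeast_Suc_lessThan algebra_simps)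
  also have "(1 - a) * (\<Sum>l\<in>{Suc k..<P}. baseline_sol P a l) = baseline_tail P a (Suc k)"
    using Suc k by simp
  finally show ?case using baseline_tail_step[OF k] by simp
qed

lemma index_Cin0_mat:
  "i < P \<Longrightarrow> j < P \<Longrightarrow> Cin0_mat P m $$ (i,j) = m + (if i = j then 1 - m else 0)"
  by simp

lemma index_one_plus_strict_upper_Cin0_mat:
  "i < P \<Longrightarrow> j < P \<Longrightarrow> (1\<^sub>m P + strict_upper (Cin0_mat P m)) $$ (i,j)
    = (if i = j then 1 else 0) + (if i < j then m else 0)"
  by simp

context
  fixes P :: nat and m a :: real
  assumes a_eq: "a = 1 - m"
begin

lemma m_eq_one_minus_a: "m = 1 - a"
  using a_eq by simp

lemma m_mult_geometric_sum: "m * (\<Sum>k<l. a^k) = 1 - a^l"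
  using one_diff_power_eq[of a l] m_eq_one_minus_a by simp

lemma colsum_B0_mat:
  assumes p: "p < P"
  shows "(\<Sum>l<P. B0_mat P m $$ (l,p)) = a^p"
proof -
  let ?A = "1\<^sub>m P + strict_upper (Cin0_mat P m)"
  have row: "(\<Sum>k<P. a^k * ?A $$ (k,l)) = 1" if l: "l < P" for l
  proof -
    have "(\<Sum>k<P. a^k * ?A $$ (k,l)) = (\<Sum>k<P. (if k = l then a^k else 0) + m * (if k < l then a^k else 0))"
      using l by (intro sum.cong refl) (simp add: index_one_plus_strict_upper_Cin0_mat algebra_simps)
    also have "\<dots> = a^l + m * (\<Sum>k<l. a^k)"
      using l by (simp add: sum.distrib sum_distrib_left[symmetric] sum_lessThan_if_less)
    finally show ?thesis by (simp add: m_mult_geometric_sum)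
  qed
  have "(\<Sum>l<P. B0_mat P m $$ (l,p)) = (\<Sum>l<P. (\<Sum>k<P. a^k * ?A $$ (k,l)) * B0_mat P m $$ (l,p))"
    by (intro sum.cong refl) (simp only: row lessThan_iff mult_1)
  also have "\<dots> = (\<Sum>l<P. \<Sum>k<P. a^k * ?A $$ (k,l) * B0_mat P m $$ (l,p))"
    by (simp only: sum_distrib_right)
  also have "\<dots> = (\<Sum>k<P. a^k * (\<Sum>l<P. ?A $$ (k,l) * B0_mat P m $$ (l,p)))"
    by (subst sum.swap) (simp add: sum_distrib_left mult.assoc)
  also have "\<dots> = (\<Sum>k<P. a^k * (?A * B0_mat P m) $$ (k,p))"
    using p B0_mat_inverse(1)
    by (simp add: index_mult_mat_sum[of _ P P _ P] del: index_mult_mat(1))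
  also have "\<dots> = (\<Sum>k<P. if k = p then a^k else 0)"
    using p by (intro sum.cong refl) (simp add: B0_mat_inverse(3))
  also have "\<dots> = a^p" using p by simp
  finally show ?thesis .
qed

lemma colsum_X0_mat:
  assumes q: "q < P"
  shows "(\<Sum>i<P. X0_mat P m $$ (i,q)) = a^P - a^(q+1)"
proof -
  have "(\<Sum>i<P. X0_mat P m $$ (i,q)) = 1 - (\<Sum>i<P. \<Sum>k<P. B0_mat P m $$ (i,k) * Cin0_mat P m $$ (k,q))"
    using q B0_mat_inverse(1) unfolding X0_mat_def
    by (simp add: index_mult_mat_sum[of _ P P _ P] sum_subtractf del: index_mult_mat(1))
  also have "(\<Sum>i<P. \<Sum>k<P. B0_mat P m $$ (i,k) * Cin0_mat P m $$ (k,q))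
      = (\<Sum>k<P. (\<Sum>i<P. B0_mat P m $$ (i,k)) * Cin0_mat P m $$ (k,q))"
    by (subst sum.swap) (simp add: sum_distrib_right)
  also have "\<dots> = (\<Sum>k<P. m * a^k + (if k = q then a^(k+1) else 0))"
    using q by (intro sum.cong refl) (simp add: colsum_B0_mat index_Cin0_mat a_eq algebra_simps)
  also have "\<dots> = m * (\<Sum>k<P. a^k) + a^(q+1)"
    using q by (simp add: sum.distrib sum_distrib_left)
  finally show ?thesis by (simp add: m_mult_geometric_sum)
qed

lemma Cin0_mat_mult_colsum_X0:
  assumes k: "k < P"
  shows "(\<Sum>j<P. Cin0_mat P m $$ (k,j) * (a^P - a^(j+1))) = baseline_rhs P a k"
proof -
  have "(\<Sum>j<P. Cin0_mat P m $$ (k,j) * (a^P - a^(j+1)))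
      = (\<Sum>j<P. (m + (if k = j then a else 0)) * (a^P - a^(j+1)))"
    using k by (intro sum.cong refl) (simp add: index_Cin0_mat a_eq)
  also have "\<dots> = m * (\<Sum>j<P. a^P - a^(j+1)) + a * (a^P - a^(k+1))"
    by (rule sum_mult_const_plus_diag[OF k])
  also have "(\<Sum>j<P. a^P - a^(j+1)) = real P * a^P - a * (\<Sum>j<P. a^j)"
    by (simp add: sum_subtractf sum_distrib_left)
  also have "m * (real P * a^P - a * (\<Sum>j<P. a^j)) = m * (real P * a^P) - a * (m * (\<Sum>j<P. a^j))"
    by (simp add: algebra_simps)
  finally show ?thesis
    unfolding m_mult_geometric_sum baseline_rhs_def by (simp add: m_eq_one_minus_a algebra_simps)
qed

lemma one_plus_strict_upper_mult_baseline_sol: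
  assumes k: "k < P" and a: "1 + a \<noteq> 0"
  shows "(\<Sum>l<P. (1\<^sub>m P + strict_upper (Cin0_mat P m)) $$ (k,l) * (baseline_sol P a l / (1 + a)))
    = baseline_rhs P a k"
proof -
  have "(\<Sum>l<P. (1\<^sub>m P + strict_upper (Cin0_mat P m)) $$ (k,l) * (baseline_sol P a l / (1 + a)))
      = (\<Sum>l<P. (if k = l then baseline_sol P a l / (1 + a) else 0)
          + m * (if k < l then baseline_sol P a l / (1 + a) else 0))"
    using k by (intro sum.cong refl) (simp add: index_one_plus_strict_upper_Cin0_mat algebra_simps)
  also have "\<dots> = (baseline_sol P a k + m * (\<Sum>l\<in>{Suc k..<P}. baseline_sol P a l)) / (1 + a)"
    using k by (simp add: sum.distrib sum_distrib_left[symmetric] sum_lessThan_if_greater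
        sum_divide_distrib[symmetric] add_divide_distrib)
  also have "m * (\<Sum>l\<in>{Suc k..<P}. baseline_sol P a l) = baseline_tail P a (Suc k)"
    using k a_eq baseline_tail_eq_sum[of "Suc k" P a] by simp
  also have "baseline_sol P a k + baseline_tail P a (Suc k) = (1 + a) * baseline_rhs P a k"
    by (rule baseline_sol_tail[OF k])
  finally show ?thesis using a by simp
qed

lemma B0_Cin0_mult_colsum_X0:
  assumes q: "q < P" and a: "1 + a \<noteq> 0"
  shows "(\<Sum>j<P. (B0_mat P m * Cin0_mat P m) $$ (q,j) * (a^P - a^(j+1))) = baseline_sol P a q / (1 + a)"
proof -
  let ?A = "1\<^sub>m P + strict_upper (Cin0_mat P m)"
  define h s where "h = vec P (\<lambda>j. a^P - a^(j+1))" and "s = vec P (\<lambda>l. baseline_sol P a l / (1 + a))"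
  have B0: "B0_mat P m \<in> carrier_mat P P" by (rule B0_mat_inverse(1))
  have "Cin0_mat P m *\<^sub>v h = ?A *\<^sub>v s"
  proof (rule eq_vecI)
    fix i assume "i < dim_vec (?A *\<^sub>v s)"
    then have i: "i < P" by simp
    have "(Cin0_mat P m *\<^sub>v h) $ i = baseline_rhs P a i"
      unfolding h_def using i by (simp only: index_mult_mat_vec_sum dim_Cin_mat Cin0_mat_mult_colsum_X0)
    also have "\<dots> = (?A *\<^sub>v s) $ i"
      unfolding s_def using i
      by (simp only: index_mult_mat_vec_sum index_add_mat(2,3) index_one_mat(2,3) dim_strict_upper dim_Cin_mat
          one_plus_strict_upper_mult_baseline_sol[OF i a])
    finally show "(Cin0_mat P m *\<^sub>v h) $ i = (?A *\<^sub>v s) $ i" .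
  qed (simp add: h_def s_def)
  then have "(B0_mat P m * Cin0_mat P m) *\<^sub>v h = B0_mat P m *\<^sub>v (?A *\<^sub>v s)"
    using B0 by (subst assoc_mult_mat_vec[of _ P P _ P]) (auto simp: h_def)
  also have "\<dots> = (B0_mat P m * ?A) *\<^sub>v s"
    using B0 by (subst assoc_mult_mat_vec[of _ P P _ P]) (auto simp: s_def)
  also have "\<dots> = s" by (simp add: B0_mat_inverse(2) s_def)
  finally have "((B0_mat P m * Cin0_mat P m) *\<^sub>v h) $ q = baseline_sol P a q / (1 + a)"
    using q by (simp add: s_def)
  moreover have "((B0_mat P m * Cin0_mat P m) *\<^sub>v h) $ q
      = (\<Sum>j<P. (B0_mat P m * Cin0_mat P m) $$ (q,j) * (a^P - a^(j+1)))"
    unfolding h_def using q by (subst index_mult_mat_vec_sum) auto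
  ultimately show ?thesis by simp
qed

lemma G_coeff_Cout_one:
  assumes p: "p < P" and q: "q < P" and a: "1 + a \<noteq> 0"
  shows "G_coeff P m 1 (p+1) (q+1)
    = a^p * (baseline_sol P a q / (1 + a)) - a^p * (a^P - a^(q+1)) - a^q * (a^P - a^(p+1))"
proof -
  define W where "W = transpose_mat (B0_mat P m) * (Cout_mat P 1 * X0_mat P m)"
  have B0: "B0_mat P m \<in> carrier_mat P P" by (rule B0_mat_inverse(1))
  have Wc: "W \<in> carrier_mat P P"
    unfolding W_def using B0 mult_carrier_mat[OF Cout_mat_carrier X0_mat_carrier]
    by (intro mult_carrier_mat[of _ P P _ P]) auto
  have H: "(Cout_mat P 1 * X0_mat P m) $$ (l,j) = a^P - a^(j+1)" if "l < P" "j < P" for l j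
  proof -
    have "(Cout_mat P 1 * X0_mat P m) $$ (l,j) = (\<Sum>k<P. Cout_mat P 1 $$ (l,k) * X0_mat P m $$ (k,j))"
      using that by (intro index_mult_mat_sum) auto
    also have "\<dots> = a^P - a^(j+1)"
      using that by (simp only: Cout_mat_mult_sum colsum_X0_mat) simp
    finally show ?thesis .
  qed
  have W: "W $$ (i,j) = a^i * (a^P - a^(j+1))" if "i < P" "j < P" for i j
  proof -
    have "W $$ (i,j) = (\<Sum>l<P. B0_mat P m $$ (l,i) * (Cout_mat P 1 * X0_mat P m) $$ (l,j))"
      unfolding W_def using that B0 mult_carrier_mat[OF Cout_mat_carrier X0_mat_carrier]
      by (subst index_mult_mat_sum[of _ P P _ P]) auto
    also have "\<dots> = a^i * (a^P - a^(j+1))"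
      using that by (simp add: H sum_distrib_right[symmetric] colsum_B0_mat)
    finally show ?thesis .
  qed
  have "(W * transpose_mat (B0_mat P m * Cin0_mat P m)) $$ (p,q)
      = (\<Sum>j<P. W $$ (p,j) * (B0_mat P m * Cin0_mat P m) $$ (q,j))"
    using p q B0 Wc by (subst index_mult_mat_sum[of _ P P _ P]) auto
  also have "\<dots> = a^p * (\<Sum>j<P. (B0_mat P m * Cin0_mat P m) $$ (q,j) * (a^P - a^(j+1)))"
    using p by (simp add: W sum_distrib_left mult_ac del: index_mult_mat(1))
  also have "\<dots> = a^p * (baseline_sol P a q / (1 + a))"
    by (simp only: B0_Cin0_mult_colsum_X0[OF q a])
  finally show ?thesis
    unfolding G_coeff_def Let_def W_def[symmetric]
    using p q by (simp add: W del: index_mult_mat(1))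
qed

end

lemma G_coeff_closed_form:
  fixes P \<mu> \<nu> :: nat and m :: real
  assumes m: "-1 < m" "m < 1" and \<mu>\<nu>: "1 \<le> \<mu>" "\<mu> < \<nu>" "\<nu> \<le> P"
  shows "G_coeff P m 1 \<mu> \<nu> =
          (- ((1 - m) ^ (P + \<mu> - 1)) - (1 - m) ^ (P + \<nu> - 1)
           + (3 - m) / (2 - m) * (1 - m) ^ (\<mu> + \<nu> - 1))
          + (- ((1 - (1 - m) ^ P * (m * real P / (1 - m) + (3 - m) / (2 - m)))
             * (1 - m) ^ (P - (\<nu> - \<mu>))))"
proof -
  define a where "a = 1 - m"
  have a0: "a > 0" and a1: "1 + a \<noteq> 0" using m unfolding a_def by auto
  define p t d where "p = \<mu> - 1" and "t = \<nu> - \<mu> - 1" and "d = P - \<nu>"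
  have ptd: "\<mu> = p + 1" "\<nu> = p + t + 2" "P = p + t + d + 2"
    using \<mu>\<nu> unfolding p_def t_def d_def by auto
  have G: "G_coeff P m 1 \<mu> \<nu> = a^p * (baseline_sol P a (p + t + 1) / (1 + a))
      - a^p * (a^P - a^(p + t + 2)) - a^(p + t + 1) * (a^P - a^(p+1))"
    using G_coeff_Cout_one[OF a_def, of p P "p + t + 1"] ptd a1 by (simp add: add.assoc)
  have exponents: "P + \<mu> - 1 = p + p + t + d + 2" "P + \<nu> - 1 = p + p + t + t + d + 3"
    "\<mu> + \<nu> - 1 = p + p + t + 2" "P - (\<nu> - \<mu>) = p + d + 1" "P - (p + t + 1) = d + 1"
    "2 * P - (p + t + 1) = p + t + d + d + 3" "p + t + d + d + 3 - 1 = p + t + d + d + 2"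
    using ptd by auto
  have m_a: "m = 1 - a" "3 - (1 - a) = 2 + a" "2 - (1 - a) = 1 + a" "1 - m = a"
    unfolding a_def by auto
  define x y z where "x = a^p" and "y = a^t" and "z = a^d"
  have nonzero: "a \<noteq> 0" "a * (1 + a) \<noteq> 0" "a + a * a \<noteq> 0" "a * a + a \<noteq> 0"
    "a + (a * (a * a) + a * (a * 2)) \<noteq> 0" "a + a * (a * a) + a * (a * 2) \<noteq> 0"
    using a0 by (auto simp: add_pos_pos) (smt (verit) mult_pos_pos)+
  show ?thesis
    using nonzero a1
    unfolding G baseline_sol_def m_a(4) exponents
    unfolding ptd(3) m_a(1-3) power_add power_one_right power_Suc
    unfolding x_def[symmetric] y_def[symmetric] z_def[symmetric]
    by (simp add: field_simps) (simp add: algebra_simps power2_eq_square power3_eq_cube)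
qed

lemma eps_f_first_order:
  fixes P :: nat and m \<rho>o :: real
  assumes "P \<ge> 2" and "psd_mat P (Cout_mat P \<rho>o)"
  shows "\<exists>K \<delta>0. \<delta>0 > 0 \<and>
    (\<forall>\<delta> dM. 0 < \<delta> \<and> \<delta> < \<delta>0 \<and> (\<forall>\<mu> \<nu>. 1 \<le> \<mu> \<and> \<mu> < \<nu> \<and> \<nu> \<le> P \<longrightarrow> \<bar>dM \<mu> \<nu>\<bar> < \<delta>) \<longrightarrow>
      \<bar>eps_f P (Cin_mat P m dM) (Cout_mat P \<rho>o) - eps_f P (Cin0_mat P m) (Cout_mat P \<rho>o)
        - 2 * (\<Sum>\<mu>=1..P. \<Sum>\<nu>=\<mu>+1..P. G_coeff P m \<rho>o \<mu> \<nu> * dM \<mu> \<nu>)\<bar> \<le> K * \<delta>^2)"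
proof -
  define b0 c0 x0 where "b0 = mat_l1_norm (B0_mat P m)" and "c0 = mat_l1_norm (Cin0_mat P m)"
    and "x0 = mat_l1_norm (X0_mat P m)"
  define \<delta>0 where "\<delta>0 = 1 / (2 * real P ^ 2 * b0 + 1)"
  define K where "K = 4 * mat_l1_norm (Cout_mat P \<rho>o) * b0^2 * (b0 * c0 + 1) * (x0 + b0 * c0 + 1)
    * real P ^ 4"
  have b0: "0 \<le> b0" unfolding b0_def by (rule mat_l1_norm_nonneg)
  then have den: "0 < 2 * real P ^ 2 * b0 + 1" by (intro add_nonneg_pos mult_nonneg_nonneg) auto
  have "\<bar>eps_f P (Cin_mat P m dM) (Cout_mat P \<rho>o) - eps_f P (Cin0_mat P m) (Cout_mat P \<rho>o)
      - 2 * (\<Sum>\<mu>=1..P. \<Sum>\<nu>=\<mu>+1..P. G_coeff P m \<rho>o \<mu> \<nu> * dM \<mu> \<nu>)\<bar> \<le> K * \<delta>^2"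
    if \<delta>: "0 < \<delta>" "\<delta> < \<delta>0" and dM: "\<forall>\<mu> \<nu>. 1 \<le> \<mu> \<and> \<mu> < \<nu> \<and> \<nu> \<le> P \<longrightarrow> \<bar>dM \<mu> \<nu>\<bar> < \<delta>"
    for \<delta> dM
  proof -
    have "real P * real P * \<delta> * b0 \<le> real P * real P * \<delta>0 * b0"
      using \<delta> b0 by (intro mult_right_mono mult_left_mono) auto
    also have "\<dots> = real P ^ 2 * b0 / (2 * real P ^ 2 * b0 + 1)"
      unfolding \<delta>0_def by (simp add: power2_eq_square)
    also have "\<dots> \<le> 1/2" using den by (simp add: pos_divide_le_eq)
    finally have "real P * real P * \<delta> * mat_l1_norm (B0_mat P m) \<le> 1/2" unfolding b0_def .
    with \<delta> dM have "\<bar>eps_f P (Cin_mat P m dM) (Cout_mat P \<rho>o) - eps_f P (Cin0_mat P m) (Cout_mat P \<rho>o)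
        - 2 * (\<Sum>\<mu>=1..P. \<Sum>\<nu>=\<mu>+1..P. G_coeff P m \<rho>o \<mu> \<nu> * dM \<mu> \<nu>)\<bar>
      \<le> 4 * mat_l1_norm (Cout_mat P \<rho>o) * b0^2 * (b0 * c0 + 1) * (x0 + b0 * c0 + 1)
        * (real P * real P * \<delta>)^2"
      unfolding b0_def c0_def x0_def by (intro eps_f_expansion[OF assms]) (auto simp: less_imp_le)
    also have "\<dots> = K * \<delta>^2"
      unfolding K_def by (simp add: power_mult_distrib power2_eq_square power4_eq_xxxx mult_ac)
    finally show ?thesis .
  qed
  moreover have "\<delta>0 > 0" unfolding \<delta>0_def using den by simp
  ultimately show ?thesis by blast
qed

theorem theorem2:
  fixes P :: nat and m \<rho>o :: real
  assumes "P \<ge> 2" and "-1 < m" and "m < 1"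
    and "psd_mat P (Cout_mat P \<rho>o)"
  shows "\<exists>G :: nat \<Rightarrow> nat \<Rightarrow> real.
     (\<rho>o = 1 \<longrightarrow> (\<forall>\<mu> \<nu>. 1 \<le> \<mu> \<and> \<mu> < \<nu> \<and> \<nu> \<le> P \<longrightarrow>
        G \<mu> \<nu> =
          (- ((1 - m) ^ (P + \<mu> - 1)) - (1 - m) ^ (P + \<nu> - 1)
           + (3 - m) / (2 - m) * (1 - m) ^ (\<mu> + \<nu> - 1))
          + (- ((1 - (1 - m) ^ P * (m * real P / (1 - m) + (3 - m) / (2 - m)))
             * (1 - m) ^ (P - (\<nu> - \<mu>)))))) \<and>
     (\<exists>K \<delta>0. \<delta>0 > 0 \<and>
        (\<forall>\<delta>m dM. 0 < \<delta>m \<and> \<delta>m < \<delta>0 \<and>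
           (\<forall>\<mu> \<nu>. 1 \<le> \<mu> \<and> \<mu> < \<nu> \<and> \<nu> \<le> P \<longrightarrow> \<bar>dM \<mu> \<nu>\<bar> < \<delta>m) \<and>
           correlation_mat P (Cin_mat P m dM) \<longrightarrow>
           \<bar>eps_f P (Cin_mat P m dM) (Cout_mat P \<rho>o)
             - eps_f P (Cin_mat P m (\<lambda>_ _. 0)) (Cout_mat P \<rho>o)
             - 2 * (\<Sum>\<mu>=1..P. \<Sum>\<nu>=\<mu>+1..P. G \<mu> \<nu> * dM \<mu> \<nu>)\<bar> \<le> K * \<delta>m^2))"
  using G_coeff_closed_form[OF assms(2,3)] eps_f_first_order[OF assms(1,4), of m]
  by (intro exI[of _ "G_coeff P m \<rho>o"] conjI) blast+

end
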